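(* An ri function norm $R$ admits the representation \[ R(X)=\sup\left\{\int_0^1X^*(\omega)Y^*(\omega)\,d\omega:\ \mathbb{E}[Y]=R'(Y)=1,\ Y\in\mathcal{M}^+\right\}\quad\text{for all }X\in\mathcal{M}^+ \] if and only if $R$ is positive translation equivariant.
   Context: $\Omega=[0,1]$ with Lebesgue measure $\mu$, $\mathbb{E}[Y]=\int_0^1Y\,d\mu$; $\mathcal{M}^+$ is the set of measurable functions with values in $[0,\infty]$. A Banach function norm is $R:\mathcal{M}^+\to[0,\infty]$ with: $R(X)=0\iff X=0$, positive homogeneity, subadditivity; monotonicity; Fatou property ($0\le X_n\uparrow X$ a.e. $\Rightarrow R(X_n)\uparrow R(X)$); $R(\chi_E)<\infty$ and $\int_EX\,d\mu\le c_ER(X)$ for a constant $c_E$ depending only on $E,R$; normalised $R(\chi_\Omega)=1$. It is an ri function norm if $R(X)=R(Y)$ whenever $X,Y$ are equimeasurable ($\mu\{|X|>\lambda\}=\mu\{|Y|>\lambda\}$ for all $\lambda\ge0$). Decreasing rearrangement: $X^*(\omega)=\inf\{\lambda\ge0:\mu\{|X|>\lambda\}\le\omega\}$. Associate norm: $R'(X)=\sup\{\int_0^1X^*Y^*\,d\omega: R(Y)\le1,\ Y\in\mathcal{M}^+\}$. $R$ is positive translation equivariant if $R(X+c)=R(X)+c$ for all $X\in\mathcal{M}^+$, $c\in\mathbb{R}$ with $X+c\ge0$. *)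

theory Defs
  imports "HOL-Analysis.Analysis"
begin

definition Omega :: "real measure" where
  "Omega = lebesgue_on {0..1}"

definition Mplus :: "(real \<Rightarrow> ennreal) set" where
  "Mplus = borel_measurable Omega"

definition expect :: "(real \<Rightarrow> ennreal) \<Rightarrow> ennreal" where
  "expect Y = (\<integral>\<^sup>+ \<omega>. Y \<omega> \<partial>Omega)"

definition drearr :: "(real \<Rightarrow> ennreal) \<Rightarrow> real \<Rightarrow> ennreal" where
  "drearr X \<omega> = Inf {l :: ennreal. emeasure Omega {x \<in> space Omega. X x > l} \<le> ennreal \<omega>}"

definition equimeasurable :: "(real \<Rightarrow> ennreal) \<Rightarrow> (real \<Rightarrow> ennreal) \<Rightarrow> bool" where
  "equimeasurable X Y \<longleftrightarrow> (\<forall>l::ennreal.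
     emeasure Omega {x \<in> space Omega. X x > l} = emeasure Omega {x \<in> space Omega. Y x > l})"

definition banach_function_norm :: "((real \<Rightarrow> ennreal) \<Rightarrow> ennreal) \<Rightarrow> bool" where
  "banach_function_norm R \<longleftrightarrow>
     (\<forall>X\<in>Mplus. R X = 0 \<longleftrightarrow> (AE \<omega> in Omega. X \<omega> = 0)) \<and>
     (\<forall>X\<in>Mplus. \<forall>c::real. c \<ge> 0 \<longrightarrow> R (\<lambda>\<omega>. ennreal c * X \<omega>) = ennreal c * R X) \<and>
     (\<forall>X\<in>Mplus. \<forall>Y\<in>Mplus. R (\<lambda>\<omega>. X \<omega> + Y \<omega>) \<le> R X + R Y) \<and>
     (\<forall>X\<in>Mplus. \<forall>Y\<in>Mplus. (AE \<omega> in Omega. X \<omega> \<le> Y \<omega>) \<longrightarrow> R X \<le> R Y) \<and>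
     (\<forall>Xs X. (\<forall>n. Xs n \<in> Mplus) \<longrightarrow> X \<in> Mplus \<longrightarrow>
        (AE \<omega> in Omega. incseq (\<lambda>n. Xs n \<omega>) \<and> (\<lambda>n. Xs n \<omega>) \<longlonglongrightarrow> X \<omega>) \<longrightarrow>
        incseq (\<lambda>n. R (Xs n)) \<and> (\<lambda>n. R (Xs n)) \<longlonglongrightarrow> R X) \<and>
     (\<forall>E\<in>sets Omega. R (indicator E) < \<infinity> \<and>
        (\<exists>cE::real. \<forall>X\<in>Mplus. (\<integral>\<^sup>+ \<omega>\<in>E. X \<omega> \<partial>Omega) \<le> ennreal cE * R X)) \<and>
     R (indicator (space Omega)) = 1"

definition ri_function_norm :: "((real \<Rightarrow> ennreal) \<Rightarrow> ennreal) \<Rightarrow> bool" where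
  "ri_function_norm R \<longleftrightarrow> banach_function_norm R \<and>
     (\<forall>X\<in>Mplus. \<forall>Y\<in>Mplus. equimeasurable X Y \<longrightarrow> R X = R Y)"

definition assoc_norm :: "((real \<Rightarrow> ennreal) \<Rightarrow> ennreal) \<Rightarrow> (real \<Rightarrow> ennreal) \<Rightarrow> ennreal" where
  "assoc_norm R X = (SUP Y\<in>{Y\<in>Mplus. R Y \<le> 1}. \<integral>\<^sup>+ \<omega>. drearr X \<omega> * drearr Y \<omega> \<partial>Omega)"

text \<open>Positive translation equivariance: R(X + c) = R(X) + c whenever X + c >= 0.
  For c >= 0 this is stated directly; for c = -d < 0 (with X >= d) it is stated as
  R(X - d) + d = R(X).\<close>
definition pos_transl_equivariant :: "((real \<Rightarrow> ennreal) \<Rightarrow> ennreal) \<Rightarrow> bool" where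
  "pos_transl_equivariant R \<longleftrightarrow>
     (\<forall>X\<in>Mplus. \<forall>c::real. c \<ge> 0 \<longrightarrow> R (\<lambda>\<omega>. X \<omega> + ennreal c) = R X + ennreal c) \<and>
     (\<forall>X\<in>Mplus. \<forall>d::real. d > 0 \<longrightarrow> (\<forall>\<omega>\<in>space Omega. ennreal d \<le> X \<omega>) \<longrightarrow>
        R (\<lambda>\<omega>. X \<omega> - ennreal d) + ennreal d = R X)"

end

theory Submission
  imports Defs
begin

text \<open>If \<open>R\<close> has the representation, then \<open>(X + c)\<^sup>* = X\<^sup>* + c\<close> and every representing
  density satisfies \<open>E[Y\<^sup>*] = 1\<close>, so \<open>R(X + c) = R(X) + c\<close>.

  Conversely, Holder's inequality for \<open>R'\<close> bounds every integral in the supremum by \<open>R(X)\<close>.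
  For the reverse inequality, \<open>X\<^sup>*\<close> is the increasing limit of decreasing step functions on
  dyadic partitions, so by the Fatou property it suffices to norm those.  On step functions with
  \<open>N\<close> cells, \<open>R\<close> is a sublinear, monotone, permutation invariant functional on \<open>\<real>\<^sup>N\<close>.  A
  supporting linear functional at a decreasing vector (Hahn--Banach) can be chosen nonnegative
  and decreasing, and translation equivariance forces its weights \<open>h\<close> to sum to \<open>1\<close>.  The
  step function \<open>Y = N h\<close> is then its own rearrangement with \<open>E[Y] = 1\<close>, and \<open>R'(Y) \<le> 1\<close>
  because averaging \<open>Z\<^sup>*\<close> over the cells does not increase \<open>R\<close>: on finer dyadic step
  functions the average is a mean of rearrangements, and the Fatou property passes to the limit.\<close>

section \<open>The unit interval\<close>

lemma space_Omega: "space Omega = {0..1}"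
  by (simp add: Omega_def)

lemma emeasure_space_Omega: "emeasure Omega (space Omega) = 1"
  by (simp add: Omega_def emeasure_restrict_space)

lemma emeasure_Omega_le_1: "emeasure Omega A \<le> 1"
proof -
  have "emeasure Omega A \<le> emeasure Omega (space Omega)"
    by (cases "A \<in> sets Omega")
      (auto intro!: emeasure_mono dest: sets.sets_into_space simp: emeasure_notin_sets)
  then show ?thesis
    by (simp add: emeasure_space_Omega)
qed

lemma atLeastLessThan_in_sets_Omega: "0 \<le> a \<Longrightarrow> b \<le> 1 \<Longrightarrow> {a..<b} \<in> sets Omega"
  unfolding Omega_def by (auto simp: sets_restrict_space_iff)

lemma emeasure_Omega_atLeastLessThan:
  assumes "0 \<le> a" "a \<le> b" "b \<le> 1"
  shows "emeasure Omega {a..<b} = ennreal (b - a)"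
  using assms unfolding Omega_def by (subst emeasure_restrict_space) auto

lemma measurable_ident_Omega [measurable]: "(\<lambda>x. x) \<in> borel_measurable Omega"
  unfolding Omega_def using id_borel_measurable_lebesgue_on by (simp add: id_def)

lemma AE_Omega_atLeastLessThan: "AE x in Omega. x \<in> {0..<1}"
proof -
  have "{x \<in> space Omega. x \<notin> {0..<1}} = {1}"
    by (auto simp: space_Omega)
  moreover have "emeasure Omega {1} = 0"
    unfolding Omega_def by (subst emeasure_restrict_space) auto
  ultimately show ?thesis
    by (subst AE_iff_measurable[of "{1}"]) (auto simp: Omega_def sets_restrict_space_iff)
qed

lemma indicator_space_Omega_in_Mplus: "indicator (space Omega) \<in> Mplus"
  unfolding Mplus_def by simp

lemma Mplus_add_const: "X \<in> Mplus \<Longrightarrow> (\<lambda>x. X x + c) \<in> Mplus"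
  unfolding Mplus_def by simp

lemma Mplus_cmult: "X \<in> Mplus \<Longrightarrow> (\<lambda>x. c * X x) \<in> Mplus"
  unfolding Mplus_def by simp

lemma Mplus_sum: "(\<And>j. j \<in> J \<Longrightarrow> F j \<in> Mplus) \<Longrightarrow> (\<lambda>x. \<Sum>j\<in>J. F j x) \<in> Mplus"
  unfolding Mplus_def by (rule borel_measurable_sum) auto

section \<open>Decreasing rearrangement\<close>

definition tail :: "(real \<Rightarrow> ennreal) \<Rightarrow> ennreal \<Rightarrow> ennreal" where
  "tail X l = emeasure Omega {x \<in> space Omega. l < X x}"

lemma tail_le_1: "tail X l \<le> 1"
  unfolding tail_def by (rule emeasure_Omega_le_1)

lemma upper_level_set_in_sets_Omega: "X \<in> Mplus \<Longrightarrow> {x \<in> space Omega. l < X x} \<in> sets Omega"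
  unfolding Mplus_def by measurable

lemma tail_antimono: "X \<in> Mplus \<Longrightarrow> l \<le> l' \<Longrightarrow> tail X l' \<le> tail X l"
  unfolding tail_def by (rule emeasure_mono) (auto intro: upper_level_set_in_sets_Omega)

lemma tail_right_continuous:
  assumes X: "X \<in> Mplus" and w: "w < tail X l"
  shows "\<exists>l'>l. w < tail X l'"
proof -
  define u where "u k = l + ennreal (inverse (Suc k))" for k :: nat
  define A where "A k = {x \<in> space Omega. u k < X x}" for k
  have "l \<noteq> \<infinity>"
    using w by (auto simp: tail_def)
  then have l_less_u: "l < u k" for k
    by (cases l) (auto simp: u_def ennreal_plus[symmetric] ennreal_less_iff simp del: ennreal_plus)
  have "incseq A"
    unfolding A_def u_def
    by (rule incseq_SucI) (auto intro: le_less_trans[rotated] add_left_mono ennreal_leI)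
  moreover have "(\<Union>k. A k) = {x \<in> space Omega. l < X x}"
  proof -
    have "u \<longlonglongrightarrow> l + ennreal 0"
      unfolding u_def by (intro tendsto_intros tendsto_ennrealI LIMSEQ_inverse_real_of_nat)
    then have "l < X x \<Longrightarrow> \<exists>k. u k < X x" for x
      unfolding ennreal_0 add_0_right
      by (metis order_tendstoD(2) eventually_sequentially order_refl)
    then show ?thesis
      unfolding A_def using l_less_u by (auto intro: less_trans)
  qed
  ultimately have "tail X l = (SUP k. emeasure Omega (A k))"
    unfolding tail_def using X
    by (metis SUP_emeasure_incseq A_def upper_level_set_in_sets_Omega image_subset_iff)
  with w obtain k where "w < tail X (u k)"
    by (auto simp: less_SUP_iff A_def tail_def)
  then show ?thesis
    using l_less_u by blast
qed

lemma drearr_tail: "drearr X w = Inf {l. tail X l \<le> ennreal w}"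
  unfolding drearr_def tail_def by simp

lemma less_drearr_iff:
  assumes X: "X \<in> Mplus"
  shows "l < drearr X w \<longleftrightarrow> ennreal w < tail X l"
proof
  assume "l < drearr X w"
  then show "ennreal w < tail X l"
    unfolding drearr_tail by (meson Inf_lower leD mem_Collect_eq not_le_imp_less)
next
  assume "ennreal w < tail X l"
  then obtain l' where "l < l'" and l': "ennreal w < tail X l'"
    using tail_right_continuous[OF X] by blast
  have "l' \<le> l''" if "tail X l'' \<le> ennreal w" for l''
    using l' that tail_antimono[OF X, of l'' l'] by (meson leI le_less_trans less_imp_le not_le)
  then have "l' \<le> drearr X w"
    unfolding drearr_tail by (auto intro: Inf_greatest)
  with \<open>l < l'\<close> show "l < drearr X w"
    by (rule less_le_trans)
qed

lemma linorder_eqI_less: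
  fixes a b :: "'a :: linorder"
  assumes "\<And>l. l < a \<longleftrightarrow> l < b"
  shows "a = b"
  using assms by (metis linorder_neqE order_less_irrefl)

lemma drearr_antimono: "w \<le> w' \<Longrightarrow> drearr X w' \<le> drearr X w"
  unfolding drearr_tail by (rule Inf_superset_mono) (auto intro: order_trans ennreal_leI)

lemma drearr_right_continuous:
  assumes X: "X \<in> Mplus" and l: "l < drearr X x"
  shows "\<exists>y>x. l < drearr X y"
proof -
  obtain t where t: "tail X l = ennreal t" "0 \<le> t"
    using tail_le_1[of X l] by (cases "tail X l") (auto simp: top_unique)
  moreover have "ennreal x < ennreal t"
    using l less_drearr_iff[OF X] t by simp
  ultimately have "x < t" "0 < t"
    by (cases "0 \<le> x"; auto simp: ennreal_less_iff ennreal_neg)+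
  then have "(x + t) / 2 > x" "ennreal ((x + t) / 2) < tail X l"
    using t by (auto intro: ennreal_lessI)
  then show ?thesis
    using less_drearr_iff[OF X] by blast
qed

lemma drearr_in_Mplus: "X \<in> Mplus \<Longrightarrow> drearr X \<in> Mplus"
  unfolding Mplus_def
proof (rule borel_measurableI_greater)
  fix l
  assume "X \<in> borel_measurable Omega"
  then have "{x \<in> space Omega. l < drearr X x} = {x \<in> space Omega. ennreal x < tail X l}"
    using less_drearr_iff by (auto simp: Mplus_def)
  also have "\<dots> \<in> sets Omega"
    by measurable
  finally show "{x \<in> space Omega. l < drearr X x} \<in> sets Omega" .
qed

lemma tail_drearr:
  assumes X: "X \<in> Mplus"
  shows "tail (drearr X) l = tail X l"
proof -
  obtain t where t: "tail X l = ennreal t" "0 \<le> t" "t \<le> 1"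
    using tail_le_1[of X l] by (cases "tail X l") (auto simp: top_unique)
  have "{x \<in> space Omega. l < drearr X x} = {0..<t}"
    using less_drearr_iff[OF X] t by (auto simp: ennreal_less_iff space_Omega)
  then show ?thesis
    using t by (simp add: tail_def emeasure_Omega_atLeastLessThan)
qed

lemma equimeasurable_iff_tail: "equimeasurable X Y \<longleftrightarrow> (\<forall>l. tail X l = tail Y l)"
  unfolding equimeasurable_def tail_def by simp

lemma equimeasurable_drearr: "X \<in> Mplus \<Longrightarrow> equimeasurable X (drearr X)"
  by (simp add: equimeasurable_iff_tail tail_drearr)

lemma distr_eq_if_equimeasurable:
  assumes X: "X \<in> Mplus" and Y: "Y \<in> Mplus" and eq: "equimeasurable X Y"
  shows "distr Omega borel X = distr Omega borel Y"
proof -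
  have [measurable]: "X \<in> borel_measurable Omega" "Y \<in> borel_measurable Omega"
    using X Y by (auto simp: Mplus_def)
  let ?E = "insert UNIV (range greaterThan) :: ennreal set set"
  have "sigma_sets UNIV (range greaterThan) = sigma_sets (UNIV :: ennreal set) ?E"
    by (rule sigma_sets_eqI) (auto intro: sigma_sets.Basic sigma_sets_top)
  then have sets_borel: "sets (borel :: ennreal measure) = sigma_sets UNIV ?E"
    by (metis borel_Ioi sets_measure_of subset_UNIV Pow_UNIV)
  have emeasure_distr_greaterThan: "emeasure (distr Omega borel Z) {l<..} = tail Z l"
    if "Z \<in> borel_measurable Omega" for Z l
    using that by (simp add: emeasure_distr tail_def vimage_def Int_def conj_commute)
  show ?thesis
  proof (rule measure_eqI_generator_eq[where E = ?E and \<Omega> = UNIV and A = "\<lambda>_. UNIV"])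
    have "{a<..} \<inter> {b<..} = {max a b<..}" for a b :: ennreal
      by auto
    then show "Int_stable ?E"
      by (auto simp: Int_stable_def)
    show "emeasure (distr Omega borel X) A = emeasure (distr Omega borel Y) A" if "A \<in> ?E" for A
      using that eq unfolding equimeasurable_iff_tail
      by (auto simp: emeasure_distr_greaterThan simp del: emeasure_distr) (simp add: emeasure_distr)
    show "emeasure (distr Omega borel X) UNIV \<noteq> \<infinity>"
      by (simp add: emeasure_distr emeasure_space_Omega)
  qed (auto simp: sets_borel)
qed

lemma nn_integral_eq_if_equimeasurable:
  assumes X: "X \<in> Mplus" and Y: "Y \<in> Mplus" and eq: "equimeasurable X Y"
  shows "(\<integral>\<^sup>+ x. X x \<partial>Omega) = (\<integral>\<^sup>+ x. Y x \<partial>Omega)"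
proof -
  have "(\<integral>\<^sup>+ v. v \<partial>distr Omega borel X) = (\<integral>\<^sup>+ v. v \<partial>distr Omega borel Y)"
    by (simp add: distr_eq_if_equimeasurable[OF assms])
  then show ?thesis
    using X Y by (simp add: nn_integral_distr Mplus_def)
qed

lemma nn_integral_drearr: "X \<in> Mplus \<Longrightarrow> (\<integral>\<^sup>+ x. drearr X x \<partial>Omega) = (\<integral>\<^sup>+ x. X x \<partial>Omega)"
  by (metis nn_integral_eq_if_equimeasurable drearr_in_Mplus equimeasurable_drearr)

lemma drearr_add_const:
  assumes X: "X \<in> Mplus" and w: "w \<in> {0..<1}"
  shows "drearr (\<lambda>x. X x + ennreal c) w = drearr X w + ennreal c"
proof (rule linorder_eqI_less)
  fix l
  have Xc: "(\<lambda>x. X x + ennreal c) \<in> Mplus"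
    using X by (rule Mplus_add_const)
  show "l < drearr (\<lambda>x. X x + ennreal c) w \<longleftrightarrow> l < drearr X w + ennreal c"
  proof (cases "l < ennreal c")
    case True
    then have "{x \<in> space Omega. l < X x + ennreal c} = space Omega"
      by (auto intro: less_le_trans)
    then have "tail (\<lambda>x. X x + ennreal c) l = 1"
      by (simp add: tail_def emeasure_space_Omega)
    then show ?thesis
      using True less_drearr_iff[OF Xc] w by (auto simp: ennreal_less_iff intro: less_le_trans)
  next
    case False
    then obtain l' where l: "l = ennreal c + l'"
      by (metis add_diff_inverse_ennreal not_less)
    have "tail (\<lambda>x. X x + ennreal c) l = tail X l'"
      unfolding tail_def l by (simp add: add.commute[of "X _"] ennreal_add_left_cancel_less)
    then show ?thesis
      using less_drearr_iff[OF Xc] less_drearr_iff[OF X]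
      unfolding l by (simp add: add.commute[of "drearr X w"] ennreal_add_left_cancel_less)
  qed
qed

lemma drearr_cmult:
  assumes X: "X \<in> Mplus" and c: "0 < c"
  shows "drearr (\<lambda>x. ennreal c * X x) w = ennreal c * drearr X w"
proof (rule linorder_eqI_less)
  fix l
  have Xc: "(\<lambda>x. ennreal c * X x) \<in> Mplus"
    using X by (rule Mplus_cmult)
  have cancel: "ennreal c * a < ennreal c * b \<longleftrightarrow> a < b" for a b
    using c by (metis ennreal_mult_strict_left_mono ennreal_less_top ennreal_less_zero_iff
        mult_left_mono not_le zero_le)
  define l' where "l' = ennreal (1 / c) * l"
  have l: "l = ennreal c * l'"
    unfolding l'_def using c by (simp add: mult.assoc[symmetric] ennreal_mult'[symmetric])
  have "tail (\<lambda>x. ennreal c * X x) l = tail X l'"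
    unfolding tail_def l cancel ..
  then show "l < drearr (\<lambda>x. ennreal c * X x) w \<longleftrightarrow> l < ennreal c * drearr X w"
    using less_drearr_iff[OF Xc] less_drearr_iff[OF X] unfolding l cancel by simp
qed

lemma drearr_eq_0_if_AE_zero:
  assumes X: "X \<in> Mplus" and ae: "AE x in Omega. X x = 0"
  shows "drearr X w = 0"
proof -
  have "tail X l = 0" for l
  proof -
    have "AE x in Omega. \<not> l < X x"
      using ae by eventually_elim simp
    then show ?thesis
      unfolding tail_def using upper_level_set_in_sets_Omega[OF X]
      by (subst AE_iff_measurable[symmetric]) auto
  qed
  then show ?thesis
    using less_drearr_iff[OF X, of 0 w] by simp
qed

lemma drearr_indicator_space:
  assumes w: "w \<in> {0..<1}"
  shows "drearr (indicator (space Omega)) w = 1"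
proof (rule linorder_eqI_less)
  fix l :: ennreal
  have "tail (indicator (space Omega)) l = (if l < 1 then 1 else 0)"
    by (auto simp: tail_def emeasure_space_Omega indicator_def)
  then show "l < drearr (indicator (space Omega)) w \<longleftrightarrow> l < 1"
    using less_drearr_iff[OF indicator_space_Omega_in_Mplus] w by (simp add: ennreal_less_iff)
qed

section \<open>Step functions on the uniform partition\<close>

definition cell :: "nat \<Rightarrow> nat \<Rightarrow> real set" where
  "cell N k = {real k / real N ..< real (Suc k) / real N}"

text \<open>Coefficients are real so that \<open>R\<close> induces a functional on \<open>\<real>\<^sup>N\<close>; \<open>ennreal\<close> clips
  negative ones to \<open>0\<close>.\<close>

definition step_fun :: "nat \<Rightarrow> (nat \<Rightarrow> real) \<Rightarrow> real \<Rightarrow> ennreal" where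
  "step_fun N c x = (\<Sum>k<N. ennreal (c k) * indicator (cell N k) x)"

lemma cell_subset: "k < N \<Longrightarrow> cell N k \<subseteq> {0..<1}"
  unfolding cell_def by (auto simp: field_simps)

lemma cell_in_sets_Omega: "k < N \<Longrightarrow> cell N k \<in> sets Omega"
  unfolding cell_def by (rule atLeastLessThan_in_sets_Omega) (auto simp: field_simps)

lemma emeasure_cell: "k < N \<Longrightarrow> emeasure Omega (cell N k) = ennreal (1 / N)"
  unfolding cell_def
  by (subst emeasure_Omega_atLeastLessThan) (auto simp: field_simps diff_divide_distrib[symmetric])

lemma cell_unique: "0 < N \<Longrightarrow> x \<in> cell N j \<Longrightarrow> x \<in> cell N k \<Longrightarrow> j = k"
proof -
  assume "0 < N" "x \<in> cell N j" "x \<in> cell N k"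
  then have "real j \<le> x * N" "x * N < real j + 1" "real k \<le> x * N" "x * N < real k + 1"
    unfolding cell_def by (auto simp: field_simps)
  then show "j = k"
    by linarith
qed

lemma cell_index:
  assumes N: "0 < N" and x: "x \<in> {0..<1}"
  shows "nat \<lfloor>x * N\<rfloor> < N" "x \<in> cell N (nat \<lfloor>x * N\<rfloor>)"
proof -
  have "0 \<le> x * N" "x * N < N"
    using x N by auto
  then have "0 \<le> \<lfloor>x * N\<rfloor>" "\<lfloor>x * N\<rfloor> < N"
    by (auto simp: floor_less_iff)
  then show "nat \<lfloor>x * N\<rfloor> < N" "x \<in> cell N (nat \<lfloor>x * N\<rfloor>)"
    unfolding cell_def using N by (auto simp: field_simps) linarith+
qed

lemma cell_mult:
  assumes N: "0 < N" and K: "0 < K" and x: "x \<in> cell (N * K) i"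
  shows "x \<in> cell N (i div K)"
proof -
  define d where "d = i div K"
  have i: "real K * real d + real (i mod K) = real i"
    unfolding d_def by (metis div_mult_mod_eq of_nat_add of_nat_mult mult.commute)
  have "i mod K + 1 \<le> K"
    using K by (simp add: Suc_le_eq)
  then have "real (i mod K) + 1 \<le> real K"
    by (metis of_nat_1 of_nat_add of_nat_le_iff)
  moreover have "real i \<le> x * real (N * K)" "x * real (N * K) < real i + 1"
    using x N K unfolding cell_def by (auto simp: field_simps)
  moreover have "x * real (N * K) = real K * (x * N)"
    by (simp add: ac_simps)
  ultimately have "real K * real d \<le> real K * (x * N)" "real K * (x * N) < real K * real d + real K"
    using i by linarith+
  moreover have "real K * real d + real K = real K * (real d + 1)"
    by (simp add: algebra_simps)
  ultimately have "real d \<le> x * N" "x * N < real d + 1"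
    using K by (simp_all add: mult_le_cancel_left_pos mult_less_cancel_left_pos)
  then show ?thesis
    unfolding cell_def d_def using N by (auto simp: field_simps)
qed

lemma step_fun_cell: "0 < N \<Longrightarrow> j < N \<Longrightarrow> x \<in> cell N j \<Longrightarrow> step_fun N c x = ennreal (c j)"
proof -
  assume N: "0 < N" and j: "j < N" "x \<in> cell N j"
  have "step_fun N c x = (\<Sum>k\<in>{j}. ennreal (c k) * indicator (cell N k) x)"
    unfolding step_fun_def
    by (rule sum.mono_neutral_right) (use j cell_unique[OF N] in \<open>auto simp: indicator_def\<close>)
  then show ?thesis
    using j by simp
qed

lemma step_fun_at: "0 < N \<Longrightarrow> x \<in> {0..<1} \<Longrightarrow> step_fun N c x = ennreal (c (nat \<lfloor>x * N\<rfloor>))"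
  using step_fun_cell cell_index by blast

lemma step_fun_outside:
  assumes "x \<notin> {0..<1}"
  shows "step_fun N c x = 0"
proof -
  have "x \<notin> cell N k" if "k < N" for k
    using cell_subset[OF that] assms by auto
  then show ?thesis
    unfolding step_fun_def by (auto intro!: sum.neutral)
qed

lemma step_fun_in_Mplus: "step_fun N c \<in> Mplus"
  unfolding step_fun_def Mplus_def
  by (intro borel_measurable_sum borel_measurable_times_ennreal)
    (auto intro: borel_measurable_indicator cell_in_sets_Omega)

lemma step_fun_cong: "(\<And>k. k < N \<Longrightarrow> c k = d k) \<Longrightarrow> step_fun N c = step_fun N d"
  unfolding step_fun_def by (intro ext sum.cong) auto

lemma step_fun_mono: "(\<And>k. k < N \<Longrightarrow> c k \<le> d k) \<Longrightarrow> step_fun N c x \<le> step_fun N d x"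
  unfolding step_fun_def by (intro sum_mono mult_right_mono ennreal_leI) auto

lemma step_fun_cmult: "0 \<le> t \<Longrightarrow> step_fun N (\<lambda>k. t * c k) x = ennreal t * step_fun N c x"
  unfolding step_fun_def sum_distrib_left by (intro sum.cong refl) (simp add: ennreal_mult' mult.assoc)

lemma step_fun_add_le: "step_fun N (\<lambda>k. c k + d k) x \<le> step_fun N c x + step_fun N d x"
proof -
  have "ennreal (a + b) \<le> ennreal a + ennreal b" for a b
  proof -
    have "ennreal (a + b) \<le> ennreal (max a 0 + max b 0)"
      by (rule ennreal_leI) simp
    also have "\<dots> = ennreal a + ennreal b"
      by (simp add: ennreal_plus max_def ennreal_neg)
    finally show ?thesis .
  qed
  then have "step_fun N (\<lambda>k. c k + d k) x
      \<le> (\<Sum>k<N. ennreal (c k) * indicator (cell N k) x + ennreal (d k) * indicator (cell N k) x)"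
    unfolding step_fun_def by (intro sum_mono) (metis distrib_right mult_right_mono zero_le)
  then show ?thesis
    by (simp add: step_fun_def sum.distrib)
qed

lemma step_fun_add_const_AE:
  assumes N: "0 < N" and c: "\<And>k. k < N \<Longrightarrow> 0 \<le> c k" and t: "0 \<le> t"
  shows "AE x in Omega. step_fun N (\<lambda>k. c k + t) x = step_fun N c x + ennreal t"
  using AE_Omega_atLeastLessThan
proof eventually_elim
  case (elim x)
  then show ?case
    using step_fun_at[OF N] cell_index[OF N] c t by (simp add: ennreal_plus)
qed

lemma step_fun_le_const:
  assumes N: "0 < N" and c: "\<And>k. k < N \<Longrightarrow> c k \<le> b"
  shows "step_fun N c x \<le> ennreal b * indicator (space Omega) x"
proof (cases "x \<in> {0..<1}")
  case True
  then show ?thesis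
    using step_fun_at[OF N True] cell_index[OF N True] c by (auto simp: space_Omega ennreal_leI)
qed (simp add: step_fun_outside)

lemma tail_step_fun:
  assumes N: "0 < N"
  shows "tail (step_fun N c) l = ennreal (card {k. k < N \<and> l < ennreal (c k)} / N)"
proof -
  let ?K = "{k. k < N \<and> l < ennreal (c k)}"
  have "{x \<in> space Omega. l < step_fun N c x} = (\<Union>k\<in>?K. cell N k)"
  proof (intro set_eqI iffI)
    fix x
    assume x: "x \<in> {x \<in> space Omega. l < step_fun N c x}"
    then have "x \<in> {0..<1}"
      by (metis (mono_tags) mem_Collect_eq not_less_zero step_fun_outside)
    then show "x \<in> (\<Union>k\<in>?K. cell N k)"
      using x cell_index[OF N] step_fun_at[OF N] by auto
  next
    fix x
    assume "x \<in> (\<Union>k\<in>?K. cell N k)"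
    then obtain k where "k < N" "l < ennreal (c k)" "x \<in> cell N k"
      by auto
    then show "x \<in> {x \<in> space Omega. l < step_fun N c x}"
      using step_fun_cell[OF N] cell_subset[of k N] by (auto simp: space_Omega)
  qed
  moreover have "emeasure Omega (\<Union>k\<in>?K. cell N k) = (\<Sum>k\<in>?K. emeasure Omega (cell N k))"
    by (rule sum_emeasure[symmetric])
      (auto intro: cell_in_sets_Omega simp: disjoint_family_on_def dest: cell_unique[OF N])
  ultimately show ?thesis
    by (simp add: tail_def emeasure_cell ennreal_of_nat_eq_real_of_nat ennreal_mult'[symmetric])
qed

lemma equimeasurable_step_fun_permute:
  assumes N: "0 < N" and s: "bij_betw s {..<N} {..<N}"
  shows "equimeasurable (step_fun N (\<lambda>k. c (s k))) (step_fun N c)"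
  unfolding equimeasurable_iff_tail
proof
  fix l
  let ?A = "{k. k < N \<and> l < ennreal (c (s k))}"
  have "?A \<subseteq> {..<N}"
    by auto
  then have "bij_betw s ?A (s ` ?A)"
    using s bij_betw_subset by blast
  moreover have "s ` ?A = {k. k < N \<and> l < ennreal (c k)}"
  proof (intro equalityI subsetI)
    fix k
    assume k: "k \<in> {k. k < N \<and> l < ennreal (c k)}"
    then obtain j where "j < N" "s j = k"
      using bij_betw_imp_surj_on[OF s] by (metis (no_types, lifting) imageE lessThan_iff mem_Collect_eq)
    then show "k \<in> s ` ?A"
      using k by auto
  qed (use s in \<open>auto simp: bij_betw_def\<close>)
  ultimately show "tail (step_fun N (\<lambda>k. c (s k))) l = tail (step_fun N c) l"
    by (simp add: tail_step_fun[OF N] bij_betw_same_card)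
qed

lemma nn_integral_step_fun_mult:
  assumes F: "F \<in> borel_measurable Omega"
  shows "(\<integral>\<^sup>+ x. step_fun N c x * F x \<partial>Omega)
    = (\<Sum>k<N. ennreal (c k) * (\<integral>\<^sup>+ x. F x * indicator (cell N k) x \<partial>Omega))"
proof -
  have [measurable]: "k < N \<Longrightarrow> cell N k \<in> sets Omega" for k
    by (rule cell_in_sets_Omega)
  have "(\<integral>\<^sup>+ x. step_fun N c x * F x \<partial>Omega)
      = (\<integral>\<^sup>+ x. (\<Sum>k<N. ennreal (c k) * (F x * indicator (cell N k) x)) \<partial>Omega)"
    unfolding step_fun_def sum_distrib_right by (simp only: mult_ac)
  also have "\<dots> = (\<Sum>k<N. \<integral>\<^sup>+ x. ennreal (c k) * (F x * indicator (cell N k) x) \<partial>Omega)"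
    using F by (intro nn_integral_sum) auto
  also have "\<dots> = (\<Sum>k<N. ennreal (c k) * (\<integral>\<^sup>+ x. F x * indicator (cell N k) x \<partial>Omega))"
    using F by (intro sum.cong refl nn_integral_cmult) auto
  finally show ?thesis .
qed

lemma nn_integral_step_fun:
  assumes N: "0 < N" and c: "\<And>k. k < N \<Longrightarrow> 0 \<le> c k"
  shows "(\<integral>\<^sup>+ x. step_fun N c x \<partial>Omega) = ennreal ((\<Sum>k<N. c k) / N)"
proof -
  have "(\<integral>\<^sup>+ x. step_fun N c x \<partial>Omega) = (\<Sum>k<N. ennreal (c k) * ennreal (1 / N))"
    using nn_integral_step_fun_mult[of "\<lambda>_. 1" N c]
    by (simp add: cell_in_sets_Omega emeasure_cell)
  also have "\<dots> = (\<Sum>k<N. ennreal (c k / N))"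
    using c by (intro sum.cong refl) (simp add: ennreal_mult'[symmetric])
  also have "\<dots> = ennreal (\<Sum>k<N. c k / N)"
    using c by (intro sum_ennreal) simp
  finally show ?thesis
    by (simp add: sum_divide_distrib)
qed

lemma nn_integral_step_fun_coarse_cell:
  assumes N: "0 < N" and K: "0 < K" and c: "\<And>i. 0 \<le> c i" and q: "q < N"
  shows "(\<integral>\<^sup>+ x. step_fun (N * K) c x * indicator (cell N q) x \<partial>Omega)
    = ennreal ((\<Sum>r<K. c (q * K + r)) / (N * K))"
proof -
  have block: "{i. i < N * K \<and> i div K = q} = (\<lambda>r. q * K + r) ` {..<K}"
  proof (intro equalityI subsetI)
    fix i
    assume "i \<in> {i. i < N * K \<and> i div K = q}"
    then show "i \<in> (\<lambda>r. q * K + r) ` {..<K}"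
      using K by (auto intro!: image_eqI[of i _ "i mod K"] simp: mult.commute)
  next
    fix i
    assume "i \<in> (\<lambda>r. q * K + r) ` {..<K}"
    moreover have "q * K + K \<le> N * K"
      using q by (metis Suc_leI add.commute mult_Suc mult_le_mono1)
    ultimately show "i \<in> {i. i < N * K \<and> i div K = q}"
      by auto
  qed
  have ind: "indicator (cell N q) x * indicator (cell (N * K) i) x
      = (if i div K = q then indicator (cell (N * K) i) x else 0 :: ennreal)" for x i
    using cell_mult[OF N K, of x i] cell_unique[OF N, of x "i div K" q]
    by (auto simp: indicator_def)
  have "(\<integral>\<^sup>+ x. step_fun (N * K) c x * indicator (cell N q) x \<partial>Omega)
      = (\<Sum>i<N * K. ennreal (c i)
          * (\<integral>\<^sup>+ x. indicator (cell N q) x * indicator (cell (N * K) i) x \<partial>Omega))"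
    using cell_in_sets_Omega[OF q] by (intro nn_integral_step_fun_mult borel_measurable_indicator)
  also have "\<dots> = (\<Sum>i<N * K. if i div K = q then ennreal (c i / (N * K)) else 0)"
    unfolding ind using c
    by (intro sum.cong refl) (auto simp: cell_in_sets_Omega emeasure_cell ennreal_mult'[symmetric])
  also have "\<dots> = (\<Sum>i\<in>{i. i < N * K \<and> i div K = q}. ennreal (c i / (N * K)))"
    by (intro sum.mono_neutral_cong_right) auto
  also have "\<dots> = (\<Sum>r<K. ennreal (c (q * K + r) / (N * K)))"
    unfolding block by (subst sum.reindex) (auto simp: inj_on_def)
  also have "\<dots> = ennreal ((\<Sum>r<K. c (q * K + r)) / (N * K))"
    using c by (simp add: sum_ennreal sum_divide_distrib)
  finally show ?thesis .
qed

lemma nn_integral_step_fun_cell: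
  assumes "0 < N" "\<And>i. 0 \<le> c i" "k < N"
  shows "(\<integral>\<^sup>+ x. step_fun N c x * indicator (cell N k) x \<partial>Omega) = ennreal (c k / N)"
  using nn_integral_step_fun_coarse_cell[of N 1 c k] assms by simp

lemma mem_downset_iff_less_card:
  fixes K :: "nat set"
  assumes "finite K" and down: "\<And>i j. i \<le> j \<Longrightarrow> j \<in> K \<Longrightarrow> i \<in> K"
  shows "j \<in> K \<longleftrightarrow> j < card K"
proof
  assume "j \<in> K"
  then have "{..j} \<subseteq> K"
    using down[of _ j] by blast
  then have "card {..j} \<le> card K"
    using \<open>finite K\<close> by (rule card_mono[rotated])
  then show "j < card K"
    by simp
next
  assume j: "j < card K"
  show "j \<in> K"
  proof (rule ccontr)
    assume "j \<notin> K"
    then have "k < j" if "k \<in> K" for k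
      using down[of j k] that by (cases "j \<le> k") auto
    then have "card K \<le> card {..<j}"
      by (intro card_mono) auto
    then show False
      using j by simp
  qed
qed
lemma drearr_step_fun:
  assumes N: "0 < N" and dec: "\<And>i j. i \<le> j \<Longrightarrow> j < N \<Longrightarrow> c j \<le> c i" and w: "w \<in> {0..<1}"
  shows "drearr (step_fun N c) w = step_fun N c w"
proof (rule linorder_eqI_less)
  fix l
  let ?K = "{k. k < N \<and> l < ennreal (c k)}"
  define j where "j = nat \<lfloor>w * N\<rfloor>"
  have j: "j < N" "w \<in> cell N j"
    using cell_index[OF N w] unfolding j_def by auto
  have "l < step_fun N c w \<longleftrightarrow> j \<in> ?K"
    using step_fun_cell[OF N j] j by simp
  also have "\<dots> \<longleftrightarrow> j < card ?K"
    using dec by (intro mem_downset_iff_less_card) (auto intro: less_le_trans ennreal_leI)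
  also have "\<dots> \<longleftrightarrow> w < card ?K / N"
    using j(2) N unfolding cell_def by (auto simp: field_simps)
  also have "\<dots> \<longleftrightarrow> l < drearr (step_fun N c) w"
    using w by (simp add: less_drearr_iff[OF step_fun_in_Mplus] tail_step_fun[OF N] ennreal_less_iff)
  finally show "l < drearr (step_fun N c) w \<longleftrightarrow> l < step_fun N c w" ..
qed

lemma AE_drearr_step_fun:
  assumes "0 < N" and "\<And>i j. i \<le> j \<Longrightarrow> j < N \<Longrightarrow> c j \<le> c i"
  shows "AE w in Omega. drearr (step_fun N c) w = step_fun N c w"
  using AE_Omega_atLeastLessThan by eventually_elim (simp add: drearr_step_fun[OF assms])

section \<open>Dyadic approximation of decreasing functions\<close>

definition dyadic_right_end :: "nat \<Rightarrow> real \<Rightarrow> real" where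
  "dyadic_right_end m x = (real (nat \<lfloor>x * 2 ^ m\<rfloor>) + 1) / 2 ^ m"

lemma dyadic_right_end_floor: "0 \<le> x \<Longrightarrow> dyadic_right_end m x = (of_int \<lfloor>x * 2 ^ m\<rfloor> + 1) / 2 ^ m"
  by (simp add: dyadic_right_end_def)

lemma less_dyadic_right_end: "0 \<le> x \<Longrightarrow> x < dyadic_right_end m x"
proof -
  assume "0 \<le> x"
  have "x * 2 ^ m < of_int \<lfloor>x * 2 ^ m\<rfloor> + 1"
    by linarith
  then show ?thesis
    using \<open>0 \<le> x\<close> by (simp add: dyadic_right_end_floor field_simps)
qed

lemma dyadic_right_end_le: "0 \<le> x \<Longrightarrow> dyadic_right_end m x \<le> x + 1 / 2 ^ m"
proof -
  assume "0 \<le> x"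
  have "of_int \<lfloor>x * 2 ^ m\<rfloor> \<le> x * 2 ^ m"
    by linarith
  then show ?thesis
    using \<open>0 \<le> x\<close> by (simp add: dyadic_right_end_floor field_simps)
qed

lemma dyadic_right_end_Suc_le: "0 \<le> x \<Longrightarrow> dyadic_right_end (Suc m) x \<le> dyadic_right_end m x"
proof -
  assume "0 \<le> x"
  define y where "y = x * 2 ^ m"
  have "\<lfloor>2 * y\<rfloor> + 1 \<le> 2 * \<lfloor>y\<rfloor> + 2"
    by linarith
  then have "real_of_int (\<lfloor>2 * y\<rfloor> + 1) \<le> real_of_int (2 * \<lfloor>y\<rfloor> + 2)"
    by (simp only: of_int_le_iff)
  have "dyadic_right_end (Suc m) x = (of_int \<lfloor>2 * y\<rfloor> + 1) / (2 * 2 ^ m)"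
    using \<open>0 \<le> x\<close> by (simp add: dyadic_right_end_floor y_def mult_ac)
  also have "\<dots> \<le> 2 * (of_int \<lfloor>y\<rfloor> + 1) / (2 * 2 ^ m)"
    using \<open>real_of_int (\<lfloor>2 * y\<rfloor> + 1) \<le> _\<close> by (intro divide_right_mono) auto
  also have "\<dots> = dyadic_right_end m x"
    using \<open>0 \<le> x\<close> by (simp add: dyadic_right_end_floor y_def field_simps)
  finally show ?thesis .
qed
definition dyadic_coeff :: "nat \<Rightarrow> (real \<Rightarrow> ennreal) \<Rightarrow> nat \<Rightarrow> real" where
  "dyadic_coeff m W i = enn2real (min (of_nat m) (W ((real i + 1) / 2 ^ m)))"

definition dyadic_approx :: "nat \<Rightarrow> (real \<Rightarrow> ennreal) \<Rightarrow> real \<Rightarrow> ennreal" where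
  "dyadic_approx m W = step_fun (2 ^ m) (dyadic_coeff m W)"

lemma dyadic_coeff_nonneg: "0 \<le> dyadic_coeff m W i"
  by (simp add: dyadic_coeff_def)

lemma dyadic_coeff_antimono:
  assumes W: "\<And>a b. a \<le> b \<Longrightarrow> W b \<le> W a" and "i \<le> j"
  shows "dyadic_coeff m W j \<le> dyadic_coeff m W i"
  unfolding dyadic_coeff_def using assms
  by (intro enn2real_mono min.mono divide_right_mono W)
    (auto intro: le_less_trans[OF min.cobounded1 of_nat_less_top])

lemma dyadic_approx_in_Mplus: "dyadic_approx m W \<in> Mplus"
  unfolding dyadic_approx_def by (rule step_fun_in_Mplus)

lemma dyadic_approx_at:
  assumes "x \<in> {0..<1}"
  shows "dyadic_approx m W x = min (of_nat m) (W (dyadic_right_end m x))"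
proof -
  have "ennreal (enn2real (min (of_nat m) w)) = min (of_nat m) w" for w
    by (rule ennreal_enn2real) (rule le_less_trans[OF min.cobounded1 of_nat_less_top])
  then show ?thesis
    using assms unfolding dyadic_approx_def
    by (subst step_fun_at) (auto simp: dyadic_coeff_def dyadic_right_end_def)
qed

lemma incseq_dyadic_approx:
  assumes W: "\<And>a b. a \<le> b \<Longrightarrow> W b \<le> W a"
  shows "incseq (\<lambda>m. dyadic_approx m W x)"
proof (rule incseq_SucI)
  fix m
  show "dyadic_approx m W x \<le> dyadic_approx (Suc m) W x"
  proof (cases "x \<in> {0..<1}")
    case True
    have "W (dyadic_right_end m x) \<le> W (dyadic_right_end (Suc m) x)"
      using True by (intro W dyadic_right_end_Suc_le) auto
    then have "min (of_nat m) (W (dyadic_right_end m x))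
        \<le> min (of_nat (Suc m)) (W (dyadic_right_end (Suc m) x))"
      by (intro min.mono) simp_all
    then show ?thesis
      using True by (simp only: dyadic_approx_at)
  qed (simp add: dyadic_approx_def step_fun_outside)
qed

lemma eventually_dyadic_right_end_le:
  assumes x: "0 \<le> x" and "x < y"
  shows "\<forall>\<^sub>F m in sequentially. dyadic_right_end m x \<le> y"
proof -
  obtain m0 :: nat where m0: "1 / (y - x) < 2 ^ m0"
    using real_arch_pow[of 2 "1 / (y - x)"] by auto
  have "dyadic_right_end m x \<le> y" if "m0 \<le> m" for m
  proof -
    have "(2 :: real) ^ m0 \<le> 2 ^ m"
      using that by (rule power_increasing) simp
    then have "1 / (y - x) < 2 ^ m"
      using m0 by linarith
    then have "1 / 2 ^ m < y - x"
      using \<open>x < y\<close> by (simp add: field_simps)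
    then show ?thesis
      using dyadic_right_end_le[OF x, of m] by linarith
  qed
  then show ?thesis
    by (rule eventually_sequentiallyI)
qed

lemma SUP_dyadic_approx:
  assumes W: "\<And>a b. a \<le> b \<Longrightarrow> W b \<le> W a"
    and right_cont: "\<And>l. l < W x \<Longrightarrow> \<exists>y>x. l < W y"
    and x: "x \<in> {0..<1}"
  shows "(SUP m. dyadic_approx m W x) = W x"
proof (rule antisym)
  have "W (dyadic_right_end m x) \<le> W x" for m
    using x less_dyadic_right_end[of x m] by (intro W) simp
  then show "(SUP m. dyadic_approx m W x) \<le> W x"
    using x by (intro SUP_least) (simp add: dyadic_approx_at min.coboundedI2)
next
  show "W x \<le> (SUP m. dyadic_approx m W x)"
  proof (rule dense_le)
    fix l
    assume "l < W x"
    then obtain y where "x < y" "l < W y"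
      using right_cont by blast
    have "l < top"
      using \<open>l < W x\<close> top_greatest by (rule less_le_trans)
    then obtain n :: nat where "l < of_nat n"
      using ennreal_Ex_less_of_nat by blast
    then have "\<forall>\<^sub>F m in sequentially. l < of_nat m"
      by (intro eventually_sequentiallyI[of n]) (metis less_le_trans of_nat_mono)
    moreover have "\<forall>\<^sub>F m in sequentially. dyadic_right_end m x \<le> y"
      using x \<open>x < y\<close> by (intro eventually_dyadic_right_end_le) auto
    ultimately have "\<forall>\<^sub>F m in sequentially. l < min (of_nat m) (W (dyadic_right_end m x))"
    proof eventually_elim
      case (elim m)
      then show ?case
        using less_le_trans[OF \<open>l < W y\<close> W[OF elim(2)]] by simp
    qed
    then obtain m where "l < dyadic_approx m W x"
      using x by (auto simp: dyadic_approx_at eventually_sequentially)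
    also have "\<dots> \<le> (SUP m. dyadic_approx m W x)"
      by (rule SUP_upper) simp
    finally show "l \<le> (SUP m. dyadic_approx m W x)"
      by (rule less_imp_le)
  qed
qed

lemma dyadic_approx_drearr_le:
  assumes X: "X \<in> Mplus"
  shows "dyadic_approx m (drearr X) x \<le> drearr X x"
proof (cases "x \<in> {0..<1}")
  case True
  have "dyadic_approx m (drearr X) x \<le> (SUP m. dyadic_approx m (drearr X) x)"
    by (rule SUP_upper) simp
  also have "\<dots> = drearr X x"
    by (rule SUP_dyadic_approx[OF drearr_antimono drearr_right_continuous[OF X] True])
  finally show ?thesis .
qed (simp add: dyadic_approx_def step_fun_outside)

lemma dyadic_approx_drearr_LIMSEQ:
  assumes X: "X \<in> Mplus" and x: "x \<in> {0..<1}"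
  shows "incseq (\<lambda>m. dyadic_approx m (drearr X) x)"
    and "(\<lambda>m. dyadic_approx m (drearr X) x) \<longlonglongrightarrow> drearr X x"
proof -
  show inc: "incseq (\<lambda>m. dyadic_approx m (drearr X) x)"
    by (rule incseq_dyadic_approx) (rule drearr_antimono)
  have "(SUP m. dyadic_approx m (drearr X) x) = drearr X x"
    by (rule SUP_dyadic_approx[OF drearr_antimono drearr_right_continuous[OF X] x])
  then show "(\<lambda>m. dyadic_approx m (drearr X) x) \<longlonglongrightarrow> drearr X x"
    using LIMSEQ_SUP[OF inc] by simp
qed

lemma AE_dyadic_approx_drearr_LIMSEQ:
  assumes X: "X \<in> Mplus"
  shows "AE x in Omega. incseq (\<lambda>m. dyadic_approx m (drearr X) x)
    \<and> (\<lambda>m. dyadic_approx m (drearr X) x) \<longlonglongrightarrow> drearr X x"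
  using AE_Omega_atLeastLessThan by eventually_elim (simp add: dyadic_approx_drearr_LIMSEQ[OF X])

lemma nn_integral_cell_dyadic_approx_LIMSEQ:
  assumes X: "X \<in> Mplus" and q: "q < N"
  shows "incseq (\<lambda>m. \<integral>\<^sup>+ x. dyadic_approx m (drearr X) x * indicator (cell N q) x \<partial>Omega)"
    and "(\<lambda>m. \<integral>\<^sup>+ x. dyadic_approx m (drearr X) x * indicator (cell N q) x \<partial>Omega)
      \<longlonglongrightarrow> (\<integral>\<^sup>+ x. drearr X x * indicator (cell N q) x \<partial>Omega)"
proof -
  let ?f = "\<lambda>m x. dyadic_approx m (drearr X) x * indicator (cell N q) x"
  have inc: "incseq ?f"
    using incseq_dyadic_approx[OF drearr_antimono]
    by (auto simp: incseq_def le_fun_def intro: mult_right_mono)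
  then show "incseq (\<lambda>m. integral\<^sup>N Omega (?f m))"
    unfolding incseq_def by (intro allI impI nn_integral_mono) (simp add: le_fun_def)
  have "(\<lambda>m. ?f m x) \<longlonglongrightarrow> drearr X x * indicator (cell N q) x" for x
    using dyadic_approx_drearr_LIMSEQ(2)[OF X] cell_subset[OF q]
    by (cases "x \<in> cell N q") (auto simp: subset_iff)
  then show "(\<lambda>m. integral\<^sup>N Omega (?f m)) \<longlonglongrightarrow> (\<integral>\<^sup>+ x. drearr X x * indicator (cell N q) x \<partial>Omega)"
    using cell_in_sets_Omega[OF q] dyadic_approx_in_Mplus
    by (intro nn_integral_LIMSEQ[OF inc]) (auto simp: Mplus_def)
qed

section \<open>Supporting functionals of sublinear functionals\<close>

locale sublinear =
  fixes p :: "(nat \<Rightarrow> real) \<Rightarrow> real"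
  assumes add_le: "p (\<lambda>k. x k + y k) \<le> p x + p y"
    and scale: "0 < t \<Longrightarrow> p (\<lambda>k. t * x k) = t * p x"
begin

lemma zero: "p (\<lambda>k. 0) = 0"
  using scale[of 2 "\<lambda>k. 0"] by simp

lemma linear_minorant_extend_bound:
  assumes g: "\<And>x. (\<forall>k\<ge>N. x k = 0) \<Longrightarrow> (\<Sum>k<N. g k * x k) \<le> p x"
  obtains \<alpha> where
    "\<And>m. \<forall>k\<ge>N. m k = 0 \<Longrightarrow> (\<Sum>k<N. g k * m k) - p (\<lambda>k. m k - of_bool (k = N)) \<le> \<alpha>"
    "\<And>m. \<forall>k\<ge>N. m k = 0 \<Longrightarrow> \<alpha> \<le> p (\<lambda>k. m k + of_bool (k = N)) - (\<Sum>k<N. g k * m k)"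
proof -
  define M where "M = {m :: nat \<Rightarrow> real. \<forall>k\<ge>N. m k = 0}"
  have gap: "(\<Sum>k<N. g k * m k) - p (\<lambda>k. m k - of_bool (k = N))
      \<le> p (\<lambda>k. m' k + of_bool (k = N)) - (\<Sum>k<N. g k * m' k)"
    if "m \<in> M" "m' \<in> M" for m m'
  proof -
    have "(\<Sum>k<N. g k * m k) + (\<Sum>k<N. g k * m' k) \<le> p (\<lambda>k. m k + m' k)"
      using g[of "\<lambda>k. m k + m' k"] that by (simp add: M_def distrib_left sum.distrib)
    also have "\<dots> \<le> p (\<lambda>k. m k - of_bool (k = N)) + p (\<lambda>k. m' k + of_bool (k = N))"
      using add_le[of "\<lambda>k. m k - of_bool (k = N)" "\<lambda>k. m' k + of_bool (k = N)"] by simp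
    finally show ?thesis
      by simp
  qed
  define \<alpha> where "\<alpha> = (SUP m\<in>M. (\<Sum>k<N. g k * m k) - p (\<lambda>k. m k - of_bool (k = N)))"
  have M0: "(\<lambda>k. 0) \<in> M"
    by (simp add: M_def)
  have bdd: "bdd_above ((\<lambda>m. (\<Sum>k<N. g k * m k) - p (\<lambda>k. m k - of_bool (k = N))) ` M)"
    by (rule bdd_aboveI2) (rule gap[OF _ M0])
  show ?thesis
  proof
    show "(\<Sum>k<N. g k * m k) - p (\<lambda>k. m k - of_bool (k = N)) \<le> \<alpha>" if "\<forall>k\<ge>N. m k = 0" for m
      unfolding \<alpha>_def using that bdd by (intro cSUP_upper) (auto simp: M_def)
    show "\<alpha> \<le> p (\<lambda>k. m k + of_bool (k = N)) - (\<Sum>k<N. g k * m k)" if "\<forall>k\<ge>N. m k = 0" for m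
      unfolding \<alpha>_def using that gap M0 by (intro cSUP_least) (auto simp: M_def)
  qed
qed

lemma linear_minorant_extend:
  assumes g: "\<And>x. (\<forall>k\<ge>N. x k = 0) \<Longrightarrow> (\<Sum>k<N. g k * x k) \<le> p x"
  shows "\<exists>\<alpha>. \<forall>x. (\<forall>k\<ge>Suc N. x k = 0) \<longrightarrow> (\<Sum>k<N. g k * x k) + \<alpha> * x N \<le> p x"
proof -
  obtain \<alpha> where \<alpha>_ge: "\<And>m. \<forall>k\<ge>N. m k = 0 \<Longrightarrow> (\<Sum>k<N. g k * m k) - p (\<lambda>k. m k - of_bool (k = N)) \<le> \<alpha>"
    and \<alpha>_le: "\<And>m. \<forall>k\<ge>N. m k = 0 \<Longrightarrow> \<alpha> \<le> p (\<lambda>k. m k + of_bool (k = N)) - (\<Sum>k<N. g k * m k)"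
    using linear_minorant_extend_bound[where g = g, OF g] by blast
  have \<alpha>_scaled: "(\<Sum>k<N. g k * m k) + t * \<alpha> \<le> p (\<lambda>k. m k + t * of_bool (k = N))"
    if m: "\<forall>k\<ge>N. m k = 0" for m t
  proof -
    have sum_scale: "(\<Sum>k<N. g k * m k / s) = (\<Sum>k<N. g k * m k) / s" for s
      by (simp add: sum_divide_distrib)
    consider "t = 0" | "0 < t" | "t < 0"
      by linarith
    then show ?thesis
    proof cases
      case 1
      then show ?thesis
        using g[OF m] by simp
    next
      case 2
      have "t * \<alpha> \<le> t * (p (\<lambda>k. m k / t + of_bool (k = N)) - (\<Sum>k<N. g k * m k) / t)"
        using \<alpha>_le[of "\<lambda>k. m k / t"] m 2 by (simp add: sum_scale)
      also have "\<dots> = p (\<lambda>k. m k + t * of_bool (k = N)) - (\<Sum>k<N. g k * m k)"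
        using 2 scale[of t "\<lambda>k. m k / t + of_bool (k = N)"] by (simp add: algebra_simps)
      finally show ?thesis
        by simp
    next
      case 3
      have "- t * ((\<Sum>k<N. g k * m k) / - t - p (\<lambda>k. m k / - t - of_bool (k = N))) \<le> - t * \<alpha>"
        using \<alpha>_ge[of "\<lambda>k. m k / - t"] m 3 by (simp add: sum_scale sum_negf)
      also have "- t * ((\<Sum>k<N. g k * m k) / - t - p (\<lambda>k. m k / - t - of_bool (k = N)))
          = (\<Sum>k<N. g k * m k) - p (\<lambda>k. m k + t * of_bool (k = N))"
        using 3 scale[of "- t" "\<lambda>k. m k / - t - of_bool (k = N)"] by (simp add: algebra_simps)
      finally show ?thesis
        by simp
    qed
  qed
  show ?thesis
  proof (intro exI allI impI)
    fix x :: "nat \<Rightarrow> real"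
    assume "\<forall>k\<ge>Suc N. x k = 0"
    then have "\<forall>k\<ge>N. (x(N := 0)) k = 0" and "x = (\<lambda>k. (x(N := 0)) k + x N * of_bool (k = N))"
      by (auto simp: Suc_le_eq)
    then show "(\<Sum>k<N. g k * x k) + \<alpha> * x N \<le> p x"
      using \<alpha>_scaled[of "x(N := 0)" "x N"] by (simp add: mult.commute)
  qed
qed

lemma linear_minorant: "\<exists>g. \<forall>x. (\<forall>k\<ge>N. x k = 0) \<longrightarrow> (\<Sum>k<N. g k * x k) \<le> p x"
proof (induction N)
  case 0
  show ?case
    using zero by (simp add: fun_eq_iff[symmetric])
next
  case (Suc N)
  then obtain g where "\<And>x. (\<forall>k\<ge>N. x k = 0) \<Longrightarrow> (\<Sum>k<N. g k * x k) \<le> p x"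
    by blast
  then obtain \<alpha> where "\<forall>x. (\<forall>k\<ge>Suc N. x k = 0) \<longrightarrow> (\<Sum>k<N. g k * x k) + \<alpha> * x N \<le> p x"
    using linear_minorant_extend by blast
  then show ?case
    by (intro exI[of _ "g(N := \<alpha>)"]) (simp add: mult.commute)
qed

definition inf_along :: "(nat \<Rightarrow> real) \<Rightarrow> (nat \<Rightarrow> real) \<Rightarrow> real" where
  "inf_along a x = (INF t\<in>{0..}. p (\<lambda>k. x k + t * a k) - t * p a)"

lemma inf_along_le: "0 \<le> t \<Longrightarrow> inf_along a x \<le> p (\<lambda>k. x k + t * a k) - t * p a"
proof -
  have "t * p a \<le> p (\<lambda>k. x k + t * a k) + p (\<lambda>k. - x k)" if "0 \<le> t" for t
    using add_le[of "\<lambda>k. x k + t * a k" "\<lambda>k. - x k"] scale[of t a] zero that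
    by (cases "t = 0") auto
  then show "0 \<le> t \<Longrightarrow> ?thesis"
    unfolding inf_along_def
    by (intro cINF_lower bdd_belowI2[where m = "- p (\<lambda>k. - x k)"]) (auto simp: algebra_simps)
qed

lemma le_inf_along: "(\<And>t. 0 \<le> t \<Longrightarrow> c \<le> p (\<lambda>k. x k + t * a k) - t * p a) \<Longrightarrow> c \<le> inf_along a x"
  unfolding inf_along_def by (rule cINF_greatest) auto

lemma inf_along_add_le: "inf_along a (\<lambda>k. x k + y k) \<le> inf_along a x + inf_along a y"
proof -
  have "inf_along a (\<lambda>k. x k + y k) - (p (\<lambda>k. y k + s * a k) - s * p a) \<le> inf_along a x"
    if "0 \<le> s" for s
  proof (rule le_inf_along)
    fix t :: real
    assume "0 \<le> t"
    have "inf_along a (\<lambda>k. x k + y k) \<le> p (\<lambda>k. (x k + t * a k) + (y k + s * a k)) - (t + s) * p a"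
      using inf_along_le[of "t + s" a "\<lambda>k. x k + y k"] \<open>0 \<le> s\<close> \<open>0 \<le> t\<close>
      by (simp add: algebra_simps)
    also have "\<dots> \<le> p (\<lambda>k. x k + t * a k) + p (\<lambda>k. y k + s * a k) - (t + s) * p a"
      using add_le by simp
    finally show "inf_along a (\<lambda>k. x k + y k) - (p (\<lambda>k. y k + s * a k) - s * p a)
        \<le> p (\<lambda>k. x k + t * a k) - t * p a"
      by (simp add: algebra_simps)
  qed
  then have "inf_along a (\<lambda>k. x k + y k) - inf_along a x \<le> inf_along a y"
    by (intro le_inf_along) (simp add: algebra_simps)
  then show ?thesis
    by simp
qed

lemma inf_along_scale:
  assumes t: "0 < t"
  shows "inf_along a (\<lambda>k. t * x k) = t * inf_along a x"
proof (rule antisym)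
  have shift: "p (\<lambda>k. t * x k + (t * u) * a k) - (t * u) * p a = t * (p (\<lambda>k. x k + u * a k) - u * p a)"
    for u
    using scale[OF t, of "\<lambda>k. x k + u * a k"] by (simp add: algebra_simps)
  have "inf_along a (\<lambda>k. t * x k) / t \<le> inf_along a x"
  proof (rule le_inf_along)
    fix u :: real
    assume "0 \<le> u"
    then have "inf_along a (\<lambda>k. t * x k) \<le> t * (p (\<lambda>k. x k + u * a k) - u * p a)"
      using inf_along_le[of "t * u" a "\<lambda>k. t * x k"] t shift[of u] by simp
    then show "inf_along a (\<lambda>k. t * x k) / t \<le> p (\<lambda>k. x k + u * a k) - u * p a"
      using t by (simp add: field_simps)
  qed
  then show "inf_along a (\<lambda>k. t * x k) \<le> t * inf_along a x"
    using t by (simp add: field_simps)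
  show "t * inf_along a x \<le> inf_along a (\<lambda>k. t * x k)"
  proof (rule le_inf_along)
    fix s :: real
    assume "0 \<le> s"
    then have "t * inf_along a x \<le> t * (p (\<lambda>k. x k + (s / t) * a k) - (s / t) * p a)"
      using t inf_along_le[of "s / t" a x] by simp
    also have "\<dots> = p (\<lambda>k. t * x k + s * a k) - s * p a"
      using t shift[of "s / t"] by simp
    finally show "t * inf_along a x \<le> p (\<lambda>k. t * x k + s * a k) - s * p a" .
  qed
qed

lemma sublinear_inf_along: "sublinear (inf_along a)"
  by unfold_locales (simp_all add: inf_along_add_le inf_along_scale)

text \<open>A linear minorant of \<open>inf_along a\<close> stays below \<open>p\<close>, and it attains \<open>p a\<close> at \<open>a\<close> because
  \<open>inf_along a (- a) \<le> - p a\<close>.\<close>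

lemma supporting_functional:
  assumes a: "\<forall>k\<ge>N. a k = 0"
  shows "\<exists>g. (\<forall>x. (\<forall>k\<ge>N. x k = 0) \<longrightarrow> (\<Sum>k<N. g k * x k) \<le> p x) \<and> (\<Sum>k<N. g k * a k) = p a"
proof -
  obtain g where g: "\<And>x. (\<forall>k\<ge>N. x k = 0) \<Longrightarrow> (\<Sum>k<N. g k * x k) \<le> inf_along a x"
    using sublinear.linear_minorant[OF sublinear_inf_along] by blast
  have inf_along_le_p: "inf_along a x \<le> p x" for x
    using inf_along_le[of 0 a x] by simp
  have "- (\<Sum>k<N. g k * a k) \<le> inf_along a (\<lambda>k. - a k)"
    using g[of "\<lambda>k. - a k"] a by (simp add: sum_negf)
  also have "\<dots> \<le> - p a"
    using inf_along_le[of 1 a "\<lambda>k. - a k"] zero by simp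
  finally have "p a \<le> (\<Sum>k<N. g k * a k)"
    by simp
  moreover have "(\<Sum>k<N. g k * a k) \<le> p a"
    using g[OF a] inf_along_le_p[of a] by simp
  ultimately show ?thesis
    using g inf_along_le_p by (intro exI[of _ g]) (auto intro: order_trans)
qed

end

section \<open>Sorting weights by a rearrangement\<close>

lemma sum_transpose_mult:
  fixes u v :: "nat \<Rightarrow> real"
  assumes "i < N" "j < N" "i \<noteq> j"
  shows "(\<Sum>k<N. u (Transposition.transpose i j k) * v k) = (\<Sum>k<N. u k * v k) + (u j - u i) * (v i - v j)"
proof -
  have "(\<Sum>k<N. u (Transposition.transpose i j k) * v k) - (\<Sum>k<N. u k * v k)
      = (\<Sum>k\<in>{i, j}. u (Transposition.transpose i j k) * v k - u k * v k)"
    unfolding sum_subtractf[symmetric]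
    by (rule sum.mono_neutral_right) (use assms in \<open>auto simp: Transposition.transpose_def\<close>)
  also have "\<dots> = (u j - u i) * (v i - v j)"
    using assms by (simp add: Transposition.transpose_def algebra_simps)
  finally show ?thesis
    by simp
qed

lemma finite_ex_max_arg:
  fixes f :: "'a \<Rightarrow> 'b :: linorder"
  assumes "finite S" "S \<noteq> {}"
  obtains s where "s \<in> S" "\<And>t. t \<in> S \<Longrightarrow> f t \<le> f s"
proof -
  have "Max (f ` S) \<in> f ` S"
    using assms by (intro Max_in) auto
  then obtain s where "s \<in> S" "f s = Max (f ` S)"
    by (metis imageE)
  then show ?thesis
    using that assms by simp
qed

text \<open>Among the permutations maximising the first sum, one maximising the sum against the strictly
  decreasing weights \<open>N - k\<close> sorts \<open>g\<close>: any inversion could be undone by a transposition.\<close>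

lemma rearrangement_decreasing:
  fixes g a :: "nat \<Rightarrow> real"
  assumes a: "\<And>i j. i \<le> j \<Longrightarrow> j < N \<Longrightarrow> a j \<le> a i"
  obtains s where "s permutes {..<N}" "(\<Sum>k<N. g k * a k) \<le> (\<Sum>k<N. g (s k) * a k)"
    "\<And>i j. i \<le> j \<Longrightarrow> j < N \<Longrightarrow> g (s j) \<le> g (s i)"
proof -
  define P where "P = {s. s permutes {..<N}}"
  define f1 where "f1 s = (\<Sum>k<N. g (s k) * a k)" for s
  define f2 where "f2 s = (\<Sum>k<N. g (s k) * (real N - real k))" for s
  have "finite P" "id \<in> P"
    unfolding P_def by (simp_all add: finite_permutations)
  then obtain s1 where "s1 \<in> P" "\<And>t. t \<in> P \<Longrightarrow> f1 t \<le> f1 s1"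
    using finite_ex_max_arg[of P f1] by blast
  define P1 where "P1 = {s \<in> P. f1 s = f1 s1}"
  have "finite P1" "P1 \<noteq> {}"
    using \<open>finite P\<close> \<open>s1 \<in> P\<close> by (auto simp: P1_def)
  then obtain s where s: "s \<in> P1" and s_max: "\<And>t. t \<in> P1 \<Longrightarrow> f2 t \<le> f2 s"
    using finite_ex_max_arg[of P1 f2] by blast
  then have s_perm: "s permutes {..<N}" and s_max1: "\<And>t. t \<in> P \<Longrightarrow> f1 t \<le> f1 s"
    using \<open>\<And>t. t \<in> P \<Longrightarrow> f1 t \<le> f1 s1\<close> by (auto simp: P1_def P_def)
  have "g (s j) \<le> g (s i)" if ij: "i \<le> j" "j < N" for i j
  proof (rule ccontr)
    assume "\<not> g (s j) \<le> g (s i)"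
    then have lt: "g (s i) < g (s j)" and "i \<noteq> j" "i < N"
      using ij by auto
    define t where "t = s \<circ> Transposition.transpose i j"
    have "t \<in> P"
      unfolding t_def P_def mem_Collect_eq
      by (rule permutes_compose[OF permutes_swap_id s_perm]) (use \<open>i < N\<close> ij in auto)
    have "f1 t = f1 s + (g (s j) - g (s i)) * (a i - a j)"
      unfolding f1_def t_def using sum_transpose_mult[OF \<open>i < N\<close> \<open>j < N\<close> \<open>i \<noteq> j\<close>] by simp
    moreover have "0 \<le> (g (s j) - g (s i)) * (a i - a j)"
      using lt a[OF ij] by simp
    ultimately have "t \<in> P1"
      using \<open>t \<in> P\<close> s s_max1[OF \<open>t \<in> P\<close>] by (simp add: P1_def)
    moreover have "f2 t = f2 s + (g (s j) - g (s i)) * (real j - real i)"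
      unfolding f2_def t_def
      using sum_transpose_mult[OF \<open>i < N\<close> \<open>j < N\<close> \<open>i \<noteq> j\<close>, of "\<lambda>k. g (s k)"] by simp
    moreover have "0 < (g (s j) - g (s i)) * (real j - real i)"
      using lt ij \<open>i \<noteq> j\<close> by simp
    ultimately show False
      using s_max by fastforce
  qed
  moreover have "(\<Sum>k<N. g k * a k) \<le> f1 s"
    using s_max1[OF \<open>id \<in> P\<close>] by (simp add: f1_def)
  ultimately show ?thesis
    using that s_perm unfolding f1_def by blast
qed

section \<open>Rearrangement-invariant norms\<close>

definition dual_densities :: "((real \<Rightarrow> ennreal) \<Rightarrow> ennreal) \<Rightarrow> (real \<Rightarrow> ennreal) set" where
  "dual_densities R = {Y \<in> Mplus. expect Y = 1 \<and> assoc_norm R Y = 1}"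

locale ri_norm =
  fixes R :: "(real \<Rightarrow> ennreal) \<Rightarrow> ennreal"
  assumes ri: "ri_function_norm R"
begin

lemma banach: "banach_function_norm R"
  using ri by (simp add: ri_function_norm_def)

lemma R_eq_0_iff: "X \<in> Mplus \<Longrightarrow> R X = 0 \<longleftrightarrow> (AE x in Omega. X x = 0)"
  using banach by (simp add: banach_function_norm_def)

lemma R_cmult: "X \<in> Mplus \<Longrightarrow> 0 \<le> c \<Longrightarrow> R (\<lambda>x. ennreal c * X x) = ennreal c * R X"
  using banach by (simp add: banach_function_norm_def)

lemma R_add_le: "X \<in> Mplus \<Longrightarrow> Y \<in> Mplus \<Longrightarrow> R (\<lambda>x. X x + Y x) \<le> R X + R Y"
  using banach by (simp add: banach_function_norm_def)

lemma R_mono: "X \<in> Mplus \<Longrightarrow> Y \<in> Mplus \<Longrightarrow> (AE x in Omega. X x \<le> Y x) \<Longrightarrow> R X \<le> R Y"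
  using banach by (simp add: banach_function_norm_def)

lemma R_cong: "X \<in> Mplus \<Longrightarrow> Y \<in> Mplus \<Longrightarrow> (AE x in Omega. X x = Y x) \<Longrightarrow> R X = R Y"
  by (rule antisym) (auto intro: R_mono elim: AE_mp)

lemma R_Fatou:
  "(\<And>n. Xs n \<in> Mplus) \<Longrightarrow> X \<in> Mplus \<Longrightarrow>
    (AE x in Omega. incseq (\<lambda>n. Xs n x) \<and> (\<lambda>n. Xs n x) \<longlonglongrightarrow> X x) \<Longrightarrow>
    incseq (\<lambda>n. R (Xs n)) \<and> (\<lambda>n. R (Xs n)) \<longlonglongrightarrow> R X"
  using banach unfolding banach_function_norm_def by blast

lemma R_le_of_approx:
  assumes "\<And>n. Xs n \<in> Mplus" "X \<in> Mplus"
    and "AE x in Omega. incseq (\<lambda>n. Xs n x) \<and> (\<lambda>n. Xs n x) \<longlonglongrightarrow> X x"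
    and "\<And>n. R (Xs n) \<le> B"
  shows "R X \<le> B"
  using R_Fatou[OF assms(1-3)] assms(4) by (auto intro: LIMSEQ_le_const2)

lemma R_indicator_space: "R (indicator (space Omega)) = 1"
  using banach by (simp add: banach_function_norm_def)

lemma nn_integral_le_R: obtains C where "\<And>X. X \<in> Mplus \<Longrightarrow> (\<integral>\<^sup>+ x. X x \<partial>Omega) \<le> ennreal C * R X"
proof -
  have "\<forall>E\<in>sets Omega. R (indicator E) < \<infinity> \<and>
      (\<exists>C. \<forall>X\<in>Mplus. (\<integral>\<^sup>+ x\<in>E. X x \<partial>Omega) \<le> ennreal C * R X)"
    using banach[unfolded banach_function_norm_def] by (elim conjE) assumption
  then obtain C where "\<forall>X\<in>Mplus. (\<integral>\<^sup>+ x\<in>space Omega. X x \<partial>Omega) \<le> ennreal C * R X"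
    by (meson sets.top)
  moreover have "(\<integral>\<^sup>+ x\<in>space Omega. X x \<partial>Omega) = (\<integral>\<^sup>+ x. X x \<partial>Omega)" for X
    by (rule nn_integral_cong) simp
  ultimately show ?thesis
    using that by auto
qed

lemma R_eq_if_equimeasurable: "X \<in> Mplus \<Longrightarrow> Y \<in> Mplus \<Longrightarrow> equimeasurable X Y \<Longrightarrow> R X = R Y"
  using ri by (simp add: ri_function_norm_def)

lemma R_drearr: "X \<in> Mplus \<Longrightarrow> R (drearr X) = R X"
  by (metis R_eq_if_equimeasurable drearr_in_Mplus equimeasurable_drearr)

lemma R_sum_le:
  assumes "\<And>j. j \<in> J \<Longrightarrow> F j \<in> Mplus"
  shows "R (\<lambda>x. \<Sum>j\<in>J. F j x) \<le> (\<Sum>j\<in>J. R (F j))"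
  using assms
proof (induction J rule: infinite_finite_induct)
  case (infinite J)
  then show ?case
    using R_eq_0_iff[of "\<lambda>_. 0"] by (simp add: Mplus_def)
next
  case empty
  then show ?case
    using R_eq_0_iff[of "\<lambda>_. 0"] by (simp add: Mplus_def)
next
  case (insert j J)
  then have "R (\<lambda>x. \<Sum>j\<in>insert j J. F j x) \<le> R (F j) + R (\<lambda>x. \<Sum>j\<in>J. F j x)"
    by (simp add: R_add_le Mplus_sum)
  also have "\<dots> \<le> R (F j) + (\<Sum>j\<in>J. R (F j))"
    using insert by (intro add_left_mono) simp
  finally show ?case
    using insert by simp
qed

lemma nn_integral_drearr_mult_le_R:
  assumes X: "X \<in> Mplus" and Y: "Y \<in> Mplus" and assoc: "assoc_norm R Y \<le> 1"
  shows "(\<integral>\<^sup>+ w. drearr X w * drearr Y w \<partial>Omega) \<le> R X"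
proof (cases "R X = 0")
  case True
  then have "AE x in Omega. X x = 0"
    using R_eq_0_iff[OF X] by simp
  then show ?thesis
    by (simp add: drearr_eq_0_if_AE_zero[OF X])
next
  case False
  show ?thesis
  proof (cases "R X = \<infinity>")
    case False': False
    then obtain r where r: "R X = ennreal r" "0 < r"
      using False by (cases "R X") (auto simp: ennreal_eq_0_iff)
    define Z where "Z x = ennreal (1 / r) * X x" for x
    have Z: "Z \<in> Mplus"
      unfolding Z_def using X by (rule Mplus_cmult)
    have "R Z = 1"
      unfolding Z_def using r by (simp add: R_cmult[OF X] ennreal_mult'[symmetric])
    then have "(\<integral>\<^sup>+ w. drearr Y w * drearr Z w \<partial>Omega) \<le> assoc_norm R Y"
      unfolding assoc_norm_def using Z by (intro SUP_upper) auto
    then have le_1: "(\<integral>\<^sup>+ w. drearr Y w * drearr Z w \<partial>Omega) \<le> 1"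
      using assoc by (rule order_trans)
    have "drearr Z w = ennreal (1 / r) * drearr X w" for w
      unfolding Z_def using r by (intro drearr_cmult X) simp
    moreover have "(\<lambda>w. drearr X w * drearr Y w) \<in> borel_measurable Omega"
      using drearr_in_Mplus[OF X] drearr_in_Mplus[OF Y] by (simp add: Mplus_def)
    ultimately have "(\<integral>\<^sup>+ w. drearr Y w * drearr Z w \<partial>Omega)
        = ennreal (1 / r) * (\<integral>\<^sup>+ w. drearr X w * drearr Y w \<partial>Omega)"
      by (subst nn_integral_cmult[symmetric]) (auto simp: mult_ac)
    then have "ennreal r * (ennreal (1 / r) * (\<integral>\<^sup>+ w. drearr X w * drearr Y w \<partial>Omega))
        \<le> ennreal r"
      using le_1 mult_left_mono[of _ 1 "ennreal r"] by simp
    then show ?thesis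
      using r by (simp add: mult.assoc[symmetric] ennreal_mult'[symmetric])
  qed simp
qed

lemma nn_integral_le_assoc_norm:
  assumes Y: "Y \<in> Mplus"
  shows "(\<integral>\<^sup>+ w. Y w \<partial>Omega) \<le> assoc_norm R Y"
proof -
  have "(\<integral>\<^sup>+ w. Y w \<partial>Omega) = (\<integral>\<^sup>+ w. drearr Y w * drearr (indicator (space Omega)) w \<partial>Omega)"
    unfolding nn_integral_drearr[OF Y, symmetric]
    by (rule nn_integral_cong_AE) (use AE_Omega_atLeastLessThan in \<open>eventually_elim, simp add: drearr_indicator_space\<close>)
  also have "\<dots> \<le> assoc_norm R Y"
    unfolding assoc_norm_def using indicator_space_Omega_in_Mplus R_indicator_space
    by (intro SUP_upper) auto
  finally show ?thesis .
qed

lemma nn_integral_drearr_dual_density: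
  "Y \<in> dual_densities R \<Longrightarrow> (\<integral>\<^sup>+ w. drearr Y w \<partial>Omega) = 1"
  by (simp add: dual_densities_def nn_integral_drearr expect_def)

lemma R_add_const_if_representation:
  assumes rep: "\<forall>X\<in>Mplus. R X = (SUP Y\<in>dual_densities R. \<integral>\<^sup>+ w. drearr X w * drearr Y w \<partial>Omega)"
    and X: "X \<in> Mplus"
  shows "R (\<lambda>x. X x + ennreal c) = R X + ennreal c"
proof -
  have "(\<integral>\<^sup>+ w. drearr (\<lambda>x. X x + ennreal c) w * drearr Y w \<partial>Omega)
      = (\<integral>\<^sup>+ w. drearr X w * drearr Y w \<partial>Omega) + ennreal c"
    if Y: "Y \<in> dual_densities R" for Y
  proof -
    have [measurable]: "drearr X \<in> borel_measurable Omega" "drearr Y \<in> borel_measurable Omega"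
      using Y drearr_in_Mplus[OF X] drearr_in_Mplus[of Y] by (auto simp: Mplus_def dual_densities_def)
    have "(\<integral>\<^sup>+ w. drearr (\<lambda>x. X x + ennreal c) w * drearr Y w \<partial>Omega)
        = (\<integral>\<^sup>+ w. drearr X w * drearr Y w + ennreal c * drearr Y w \<partial>Omega)"
      by (rule nn_integral_cong_AE)
        (use AE_Omega_atLeastLessThan in \<open>eventually_elim, simp add: drearr_add_const[OF X] distrib_right\<close>)
    also have "\<dots> = (\<integral>\<^sup>+ w. drearr X w * drearr Y w \<partial>Omega) + ennreal c"
      using nn_integral_drearr_dual_density[OF Y] by (simp add: nn_integral_add nn_integral_cmult)
    finally show ?thesis .
  qed
  moreover have "dual_densities R \<noteq> {}"
  proof
    assume "dual_densities R = {}"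
    then have "R (indicator (space Omega)) = 0"
      using rep indicator_space_Omega_in_Mplus by (simp add: bot_ennreal)
    then show False
      using R_indicator_space by simp
  qed
  ultimately show ?thesis
    using rep X Mplus_add_const[OF X] by (simp add: ennreal_SUP_add_left)
qed

lemma pos_transl_equivariant_if_representation:
  assumes rep: "\<forall>X\<in>Mplus. R X = (SUP Y\<in>dual_densities R. \<integral>\<^sup>+ w. drearr X w * drearr Y w \<partial>Omega)"
  shows "pos_transl_equivariant R"
  unfolding pos_transl_equivariant_def
proof (intro conjI ballI allI impI)
  fix X c
  assume "X \<in> Mplus"
  then show "R (\<lambda>w. X w + ennreal c) = R X + ennreal c"
    by (rule R_add_const_if_representation[OF rep])
next
  fix X d
  assume X: "X \<in> Mplus" and "0 < d" and "\<forall>w\<in>space Omega. ennreal d \<le> X w"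
  then have "AE w in Omega. X w - ennreal d + ennreal d = X w"
    by (intro AE_I2) (simp add: diff_add_cancel_ennreal)
  moreover have X': "(\<lambda>w. X w - ennreal d) \<in> Mplus"
    using X by (simp add: Mplus_def)
  ultimately show "R (\<lambda>w. X w - ennreal d) + ennreal d = R X"
    using R_add_const_if_representation[OF rep X'] R_cong[OF Mplus_add_const[OF X', of "ennreal d"] X]
    by simp
qed

end

section \<open>Averaging over blocks of cells\<close>

lemma bij_betw_add_mod:
  assumes K: "0 < (K :: nat)"
  shows "bij_betw (\<lambda>r. (r + j) mod K) {..<K} {..<K}"
proof -
  have eq: "r = r'" if "r \<le> r'" "r' < K" "(r + j) mod K = (r' + j) mod K" for r r'
  proof -
    have "K dvd r' - r"
      using that mod_eq_dvd_iff_nat[of "r + j" "r' + j" K] by simp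
    then show ?thesis
      using that dvd_imp_le[of K "r' - r"] by (cases "r = r'") auto
  qed
  have "inj_on (\<lambda>r. (r + j) mod K) {..<K}"
  proof (rule inj_onI)
    fix r r'
    assume "r \<in> {..<K}" "r' \<in> {..<K}" "(r + j) mod K = (r' + j) mod K"
    then show "r = r'"
      using eq[of r r'] eq[of r' r] by (cases "r \<le> r'") auto
  qed
  moreover have "(\<lambda>r. (r + j) mod K) ` {..<K} = {..<K}"
    using K by (intro endo_inj_surj calculation) auto
  ultimately show ?thesis
    by (simp add: bij_betw_def)
qed

definition block_rotate :: "nat \<Rightarrow> nat \<Rightarrow> nat \<Rightarrow> nat" where
  "block_rotate K j i = i div K * K + (i mod K + j) mod K"

lemma bij_betw_block_rotate:
  assumes K: "0 < K"
  shows "bij_betw (block_rotate K j) {..<N * K} {..<N * K}"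
proof -
  have mod_less: "(i mod K + j) mod K < K" for i
    using K by simp
  have "block_rotate K j i < N * K" if "i < N * K" for i
  proof -
    have "i div K < N"
      using that by (simp add: less_mult_imp_div_less)
    then have "i div K * K + K \<le> N * K"
      by (metis Suc_leI add.commute mult_Suc mult_le_mono1)
    then show ?thesis
      unfolding block_rotate_def using mod_less[of i] by linarith
  qed
  moreover have inj: "inj_on (block_rotate K j) {..<N * K}"
  proof (rule inj_onI)
    fix i i'
    assume eq: "block_rotate K j i = block_rotate K j i'"
    have rot_div: "block_rotate K j i div K = i div K"
      and rot_mod: "block_rotate K j i mod K = (i mod K + j) mod K" for i
      unfolding block_rotate_def using mod_less[of i] K by simp_all
    have "(i mod K + j) mod K = (i' mod K + j) mod K"
      using rot_mod[of i] rot_mod[of i'] eq by simp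
    then have "i mod K = i' mod K"
      by (rule inj_onD[OF bij_betw_imp_inj_on[OF bij_betw_add_mod[OF K]]]) (use K in auto)
    moreover have "i div K = i' div K"
      using rot_div[of i] rot_div[of i'] eq by simp
    ultimately show "i = i'"
      by (metis div_mult_mod_eq)
  qed
  ultimately have "block_rotate K j ` {..<N * K} = {..<N * K}"
    by (intro endo_inj_surj) auto
  with inj show ?thesis
    by (simp add: bij_betw_def)
qed

definition block_avg :: "nat \<Rightarrow> (nat \<Rightarrow> real) \<Rightarrow> nat \<Rightarrow> real" where
  "block_avg K c q = (\<Sum>r<K. c (q * K + r)) / K"

lemma block_avg_eq_nn_integral_cell:
  assumes N: "0 < N" and K: "0 < K" and c: "\<And>i. 0 \<le> c i" and q: "q < N"
  shows "ennreal (block_avg K c q)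
    = of_nat N * (\<integral>\<^sup>+ x. step_fun (N * K) c x * indicator (cell N q) x \<partial>Omega)"
proof -
  have "0 \<le> (\<Sum>r<K. c (q * K + r))"
    using c by (simp add: sum_nonneg)
  then show ?thesis
    using N K unfolding nn_integral_step_fun_coarse_cell[OF N K c q] block_avg_def
    by (simp add: ennreal_of_nat_eq_real_of_nat ennreal_mult'[symmetric])
qed

lemma step_fun_block_avg:
  assumes N: "0 < N" and K: "0 < K" and c: "\<And>i. 0 \<le> c i"
  shows "step_fun N (block_avg K c) x
    = (\<Sum>j<K. ennreal (1 / K) * step_fun (N * K) (\<lambda>i. c (block_rotate K j i)) x)"
proof (cases "x \<in> {0..<1}")
  case True
  have NK: "0 < N * K"
    using N K by simp
  define i where "i = nat \<lfloor>x * real (N * K)\<rfloor>"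
  have i: "i < N * K" "x \<in> cell (N * K) i"
    using cell_index[OF NK True] unfolding i_def by auto
  have "(\<Sum>j<K. c (block_rotate K j i)) = (\<Sum>j<K. (\<lambda>r. c (i div K * K + r)) ((j + i mod K) mod K))"
    unfolding block_rotate_def by (simp add: add.commute)
  also have "\<dots> = (\<Sum>r<K. c (i div K * K + r))"
    by (rule sum.reindex_bij_betw[OF bij_betw_add_mod[OF K]])
  finally have "block_avg K c (i div K) = (\<Sum>j<K. c (block_rotate K j i) / K)"
    unfolding block_avg_def by (simp add: sum_divide_distrib[symmetric])
  moreover have "step_fun N (block_avg K c) x = ennreal (block_avg K c (i div K))"
    using step_fun_cell[OF N _ cell_mult[OF N K i(2)]] i(1) by (simp add: less_mult_imp_div_less)
  moreover have "(\<Sum>j<K. ennreal (1 / K) * step_fun (N * K) (\<lambda>i. c (block_rotate K j i)) x)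
      = (\<Sum>j<K. ennreal (c (block_rotate K j i) / K))"
    using c by (intro sum.cong refl) (simp add: step_fun_cell[OF NK i] ennreal_mult'[symmetric])
  ultimately show ?thesis
    using c by (simp add: sum_ennreal)
qed (simp add: step_fun_outside)

context ri_norm
begin

lemma R_step_fun_block_avg_le:
  assumes N: "0 < N" and K: "0 < K" and c: "\<And>i. 0 \<le> c i"
  shows "R (step_fun N (block_avg K c)) \<le> R (step_fun (N * K) c)"
proof -
  have NK: "0 < N * K"
    using N K by simp
  have "R (step_fun N (block_avg K c))
      \<le> (\<Sum>j<K. R (\<lambda>x. ennreal (1 / K) * step_fun (N * K) (\<lambda>i. c (block_rotate K j i)) x))"
    unfolding step_fun_block_avg[OF N K c] by (intro R_sum_le Mplus_cmult step_fun_in_Mplus)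
  also have "\<dots> = (\<Sum>j<K. ennreal (1 / K) * R (step_fun (N * K) c))"
    using R_eq_if_equimeasurable[OF step_fun_in_Mplus step_fun_in_Mplus
        equimeasurable_step_fun_permute[OF NK bij_betw_block_rotate[OF K]]]
    by (simp add: R_cmult step_fun_in_Mplus)
  also have "\<dots> = (of_nat K * ennreal (1 / K)) * R (step_fun (N * K) c)"
    by (simp add: mult.assoc)
  also have "of_nat K * ennreal (1 / K) = 1"
    using K by (simp add: ennreal_of_nat_eq_real_of_nat ennreal_mult'[symmetric])
  finally show ?thesis
    by simp
qed

end

text \<open>Only meaningful for integrable \<open>W\<close>: \<open>enn2real\<close> sends \<open>\<infinity>\<close> to \<open>0\<close>.\<close>

definition cell_avg :: "nat \<Rightarrow> (real \<Rightarrow> ennreal) \<Rightarrow> nat \<Rightarrow> real" where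
  "cell_avg N W q = enn2real (of_nat N * (\<integral>\<^sup>+ x. W x * indicator (cell N q) x \<partial>Omega))"

lemma step_fun_block_avg_dyadic_LIMSEQ:
  fixes n :: nat
  assumes X: "X \<in> Mplus" and fin: "(\<integral>\<^sup>+ x. X x \<partial>Omega) < \<infinity>"
  defines "\<beta> j \<equiv> block_avg (2 ^ j) (dyadic_coeff (n + j) (drearr X))"
  shows "incseq (\<lambda>j. step_fun (2 ^ n) (\<beta> j) x)
    \<and> (\<lambda>j. step_fun (2 ^ n) (\<beta> j) x) \<longlonglongrightarrow> step_fun (2 ^ n) (cell_avg (2 ^ n) (drearr X)) x"
proof (cases "x \<in> {0..<1}")
  case True
  define N :: nat where "N = 2 ^ n"
  have N: "0 < N"
    by (simp add: N_def)
  define q where "q = nat \<lfloor>x * N\<rfloor>"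
  have q: "q < N" "x \<in> cell N q"
    using cell_index[OF N True] by (simp_all add: q_def)
  define J where "J m = (\<integral>\<^sup>+ x. dyadic_approx m (drearr X) x * indicator (cell N q) x \<partial>Omega)" for m
  have step_\<beta>: "step_fun N (\<beta> j) x = of_nat N * J (n + j)" for j
  proof -
    have "step_fun N (\<beta> j) x = ennreal (\<beta> j q)"
      using step_fun_cell[OF N q] .
    also have "\<dots> = of_nat N
        * (\<integral>\<^sup>+ x. step_fun (N * 2 ^ j) (dyadic_coeff (n + j) (drearr X)) x * indicator (cell N q) x \<partial>Omega)"
      unfolding \<beta>_def by (rule block_avg_eq_nn_integral_cell[OF N _ dyadic_coeff_nonneg q(1)]) simp
    also have "\<dots> = of_nat N * J (n + j)"
      by (simp add: J_def dyadic_approx_def N_def power_add)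
    finally show ?thesis .
  qed
  have J_lim: "(\<lambda>j. J (n + j)) \<longlonglongrightarrow> (\<integral>\<^sup>+ x. drearr X x * indicator (cell N q) x \<partial>Omega)"
    using LIMSEQ_ignore_initial_segment[OF nn_integral_cell_dyadic_approx_LIMSEQ(2)[OF X q(1)], of n]
    by (simp add: J_def add.commute)
  have "(\<integral>\<^sup>+ x. drearr X x * indicator (cell N q) x \<partial>Omega) \<le> (\<integral>\<^sup>+ x. X x \<partial>Omega)"
    unfolding nn_integral_drearr[OF X, symmetric] by (intro nn_integral_mono) (simp add: indicator_def)
  then have "step_fun N (cell_avg N (drearr X)) x
      = of_nat N * (\<integral>\<^sup>+ x. drearr X x * indicator (cell N q) x \<partial>Omega)"
    using step_fun_cell[OF N q] fin
    by (simp add: cell_avg_def ennreal_mult_less_top of_nat_less_top le_less_trans)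
  moreover have "incseq (\<lambda>j. J (n + j))"
    using nn_integral_cell_dyadic_approx_LIMSEQ(1)[OF X q(1)] by (simp add: J_def incseq_def)
  ultimately show ?thesis
    unfolding N_def[symmetric] step_\<beta>
    using ennreal_tendsto_cmult[OF of_nat_less_top J_lim]
    by (auto simp: incseq_def intro: mult_left_mono)
qed (simp add: step_fun_outside)

context ri_norm
begin

lemma R_step_fun_cell_avg_le:
  assumes Z: "Z \<in> Mplus" and fin: "(\<integral>\<^sup>+ x. Z x \<partial>Omega) < \<infinity>"
  shows "R (step_fun (2 ^ n) (cell_avg (2 ^ n) (drearr Z))) \<le> R Z"
proof (rule R_le_of_approx)
  define \<beta> where "\<beta> j = block_avg (2 ^ j) (dyadic_coeff (n + j) (drearr Z))" for j
  show "AE x in Omega. incseq (\<lambda>j. step_fun (2 ^ n) (\<beta> j) x)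
      \<and> (\<lambda>j. step_fun (2 ^ n) (\<beta> j) x) \<longlonglongrightarrow> step_fun (2 ^ n) (cell_avg (2 ^ n) (drearr Z)) x"
    unfolding \<beta>_def using step_fun_block_avg_dyadic_LIMSEQ[OF Z fin] by simp
  show "R (step_fun (2 ^ n) (\<beta> j)) \<le> R Z" for j
  proof -
    have "R (step_fun (2 ^ n) (\<beta> j)) \<le> R (dyadic_approx (n + j) (drearr Z))"
      unfolding \<beta>_def dyadic_approx_def power_add
      by (rule R_step_fun_block_avg_le) (simp_all add: dyadic_coeff_nonneg)
    also have "\<dots> \<le> R (drearr Z)"
      using dyadic_approx_drearr_le[OF Z]
      by (intro R_mono dyadic_approx_in_Mplus drearr_in_Mplus[OF Z] AE_I2)
    finally show ?thesis
      using R_drearr[OF Z] by simp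
  qed
qed (auto intro: step_fun_in_Mplus)

end

section \<open>Norms of step functions\<close>

lemma nn_integral_step_fun_mult_step_fun:
  fixes a h :: "nat \<Rightarrow> real"
  assumes N: "0 < N" and a: "\<And>k. k < N \<Longrightarrow> 0 \<le> a k" and h: "\<And>k. 0 \<le> h k"
  shows "(\<integral>\<^sup>+ x. step_fun N a x * step_fun N (\<lambda>k. N * h k) x \<partial>Omega) = ennreal (\<Sum>k<N. a k * h k)"
proof -
  have "(\<integral>\<^sup>+ x. step_fun N a x * step_fun N (\<lambda>k. N * h k) x \<partial>Omega)
      = (\<Sum>k<N. ennreal (a k) * ennreal (h k))"
    using N h step_fun_in_Mplus
    by (simp add: nn_integral_step_fun_mult nn_integral_step_fun_cell Mplus_def)
  also have "\<dots> = (\<Sum>k<N. ennreal (a k * h k))"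
    using h by (intro sum.cong refl) (simp add: ennreal_mult'')
  also have "\<dots> = ennreal (\<Sum>k<N. a k * h k)"
    using a h by (intro sum_ennreal) simp
  finally show ?thesis .
qed

context ri_norm
begin

lemma R_step_fun_less_top:
  assumes N: "0 < N"
  shows "R (step_fun N c) < \<infinity>"
proof -
  define b where "b = (\<Sum>k<N. max (c k) 0)"
  have "c k \<le> b" if "k < N" for k
  proof -
    have "c k \<le> max (c k) 0"
      by simp
    also have "\<dots> \<le> b"
      unfolding b_def using that by (intro member_le_sum) auto
    finally show ?thesis .
  qed
  then have "R (step_fun N c) \<le> R (\<lambda>x. ennreal b * indicator (space Omega) x)"
    by (intro R_mono step_fun_in_Mplus Mplus_cmult indicator_space_Omega_in_Mplus AE_I2
        step_fun_le_const[OF N])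
  also have "\<dots> = ennreal b"
    by (simp add: R_cmult indicator_space_Omega_in_Mplus R_indicator_space b_def sum_nonneg)
  finally show ?thesis
    by (simp add: le_less_trans)
qed

definition step_norm :: "nat \<Rightarrow> (nat \<Rightarrow> real) \<Rightarrow> real" where
  "step_norm N c = enn2real (R (step_fun N c))"

lemma R_step_fun: "0 < N \<Longrightarrow> R (step_fun N c) = ennreal (step_norm N c)"
  unfolding step_norm_def using R_step_fun_less_top by (simp add: less_top)

lemma step_norm_nonneg: "0 \<le> step_norm N c"
  by (simp add: step_norm_def)

lemma step_norm_cong: "(\<And>k. k < N \<Longrightarrow> c k = d k) \<Longrightarrow> step_norm N c = step_norm N d"
  unfolding step_norm_def by (simp add: step_fun_cong[of N c d])

lemma step_norm_mono:
  assumes N: "0 < N" and le: "\<And>k. k < N \<Longrightarrow> c k \<le> d k"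
  shows "step_norm N c \<le> step_norm N d"
proof -
  have "R (step_fun N c) \<le> R (step_fun N d)"
    using le by (intro R_mono step_fun_in_Mplus AE_I2 step_fun_mono) auto
  then show ?thesis
    by (simp add: R_step_fun[OF N] step_norm_nonneg)
qed

lemma step_norm_permute:
  "0 < N \<Longrightarrow> bij_betw s {..<N} {..<N} \<Longrightarrow> step_norm N (\<lambda>k. c (s k)) = step_norm N c"
  unfolding step_norm_def
  using R_eq_if_equimeasurable[OF step_fun_in_Mplus step_fun_in_Mplus equimeasurable_step_fun_permute]
  by simp

lemma sublinear_step_norm:
  assumes N: "0 < N"
  shows "sublinear (step_norm N)"
proof
  fix c d :: "nat \<Rightarrow> real"
  have "R (step_fun N (\<lambda>k. c k + d k)) \<le> R (\<lambda>x. step_fun N c x + step_fun N d x)"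
    using step_fun_in_Mplus[of N c] step_fun_in_Mplus[of N d]
    by (intro R_mono step_fun_in_Mplus AE_I2 step_fun_add_le) (simp add: Mplus_def)
  also have "\<dots> \<le> R (step_fun N c) + R (step_fun N d)"
    by (intro R_add_le step_fun_in_Mplus)
  finally show "step_norm N (\<lambda>k. c k + d k) \<le> step_norm N c + step_norm N d"
    by (simp add: R_step_fun[OF N] step_norm_nonneg ennreal_plus[symmetric] del: ennreal_plus)
next
  fix t :: real and c :: "nat \<Rightarrow> real"
  assume t: "0 < t"
  then have "step_fun N (\<lambda>k. t * c k) = (\<lambda>x. ennreal t * step_fun N c x)"
    by (intro ext step_fun_cmult) simp
  then have "R (step_fun N (\<lambda>k. t * c k)) = ennreal t * R (step_fun N c)"
    using t by (simp add: R_cmult step_fun_in_Mplus)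
  then show "step_norm N (\<lambda>k. t * c k) = t * step_norm N c"
    using t by (simp add: step_norm_def enn2real_mult)
qed

lemma step_norm_add_const:
  assumes pte: "pos_transl_equivariant R"
    and N: "0 < N" and c: "\<And>k. k < N \<Longrightarrow> 0 \<le> c k" and t: "0 \<le> t"
  shows "step_norm N (\<lambda>k. c k + t) = step_norm N c + t"
proof -
  have "R (step_fun N (\<lambda>k. c k + t)) = R (\<lambda>x. step_fun N c x + ennreal t)"
    using step_fun_add_const_AE[OF N c t] by (intro R_cong step_fun_in_Mplus Mplus_add_const)
  also have "\<dots> = R (step_fun N c) + ennreal t"
    using pte step_fun_in_Mplus t unfolding pos_transl_equivariant_def by blast
  finally show ?thesis
    using t step_norm_nonneg[of N "\<lambda>k. c k + t"]
    by (simp add: R_step_fun[OF N] step_norm_nonneg ennreal_plus[symmetric] del: ennreal_plus)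
qed

end

section \<open>Densities attaining the norm\<close>

context ri_norm
begin

lemma nonneg_support_weights:
  assumes N: "0 < N" and a: "\<And>k. k < N \<Longrightarrow> 0 \<le> a k"
  obtains g where "\<And>k. 0 \<le> g k"
    and "\<forall>c. (\<forall>k<N. 0 \<le> c k) \<longrightarrow> (\<Sum>k<N. g k * c k) \<le> step_norm N c"
    and "step_norm N a \<le> (\<Sum>k<N. g k * a k)"
proof -
  define restr where "restr x k = (if k < N then x k else 0)" for x :: "nat \<Rightarrow> real" and k
  have step_norm_restr: "step_norm N (restr x) = step_norm N x" for x
    by (rule step_norm_cong) (simp add: restr_def)
  have sum_restr: "(\<Sum>k<N. g k * restr x k) = (\<Sum>k<N. g k * x k)" for g x
    by (rule sum.cong) (simp_all add: restr_def)
  have restr_supp: "\<forall>k\<ge>N. restr x k = 0" for x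
    by (simp add: restr_def)
  obtain g where g_restr: "\<And>x. (\<forall>k\<ge>N. x k = 0) \<Longrightarrow> (\<Sum>k<N. g k * x k) \<le> step_norm N x"
    and "(\<Sum>k<N. g k * restr a k) = step_norm N (restr a)"
    using sublinear.supporting_functional[OF sublinear_step_norm[OF N] restr_supp] by blast
  then have ga: "(\<Sum>k<N. g k * a k) = step_norm N a"
    by (simp only: sum_restr step_norm_restr)
  have g: "(\<Sum>k<N. g k * x k) \<le> step_norm N x" for x
    using g_restr[OF restr_supp] by (simp only: sum_restr step_norm_restr)
  define g' where "g' k = max (g k) 0" for k
  show ?thesis
  proof
    show "0 \<le> g' k" for k
      by (simp add: g'_def)
    show "\<forall>c. (\<forall>k<N. 0 \<le> c k) \<longrightarrow> (\<Sum>k<N. g' k * c k) \<le> step_norm N c"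
    proof (intro allI impI)
      fix c :: "nat \<Rightarrow> real"
      assume c: "\<forall>k<N. 0 \<le> c k"
      have "(\<Sum>k<N. g' k * c k) = (\<Sum>k<N. g k * (if 0 < g k then c k else 0))"
        by (rule sum.cong) (auto simp: g'_def)
      also have "\<dots> \<le> step_norm N (\<lambda>k. if 0 < g k then c k else 0)"
        by (rule g)
      also have "\<dots> \<le> step_norm N c"
        using c by (intro step_norm_mono[OF N]) auto
      finally show "(\<Sum>k<N. g' k * c k) \<le> step_norm N c" .
    qed
    show "step_norm N a \<le> (\<Sum>k<N. g' k * a k)"
      unfolding ga[symmetric] g'_def using a by (intro sum_mono mult_right_mono) auto
  qed
qed

lemma support_weights:
  assumes N: "0 < N" and a: "\<And>k. k < N \<Longrightarrow> 0 \<le> a k"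
    and a_dec: "\<And>i j. i \<le> j \<Longrightarrow> j < N \<Longrightarrow> a j \<le> a i"
  obtains h where "\<And>k. 0 \<le> h k" and "\<And>i j. i \<le> j \<Longrightarrow> j < N \<Longrightarrow> h j \<le> h i"
    and "\<forall>c. (\<forall>k<N. 0 \<le> c k) \<longrightarrow> (\<Sum>k<N. h k * c k) \<le> step_norm N c"
    and "(\<Sum>k<N. h k * a k) = step_norm N a"
proof -
  obtain g where g_nonneg: "\<And>k. 0 \<le> g k"
    and g_le: "\<forall>c. (\<forall>k<N. 0 \<le> c k) \<longrightarrow> (\<Sum>k<N. g k * c k) \<le> step_norm N c"
    and g_a: "step_norm N a \<le> (\<Sum>k<N. g k * a k)"
    using nonneg_support_weights[where a = a, OF N a] by blast
  obtain s where s: "s permutes {..<N}" and s_a: "(\<Sum>k<N. g k * a k) \<le> (\<Sum>k<N. g (s k) * a k)"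
    and s_dec: "\<And>i j. i \<le> j \<Longrightarrow> j < N \<Longrightarrow> g (s j) \<le> g (s i)"
    using rearrangement_decreasing[where a = a and g = g, OF a_dec] by blast
  have h_le: "(\<Sum>k<N. g (s k) * c k) \<le> step_norm N c" if c: "\<forall>k<N. 0 \<le> c k" for c
  proof -
    have "(\<Sum>k<N. g (s k) * c k) = (\<Sum>k<N. g k * c (inv s k))"
      using sum.reindex_bij_betw[OF permutes_imp_bij[OF s], of "\<lambda>k. g k * c (inv s k)"]
      by (simp add: permutes_inverses(2)[OF s])
    also have "\<dots> \<le> step_norm N (\<lambda>k. c (inv s k))"
      using g_le c permutes_in_image[OF permutes_inv[OF s]] by simp
    also have "\<dots> = step_norm N c"
      using N permutes_imp_bij[OF permutes_inv[OF s]] by (rule step_norm_permute)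
    finally show ?thesis .
  qed
  show ?thesis
  proof (rule that)
    show "0 \<le> g (s k)" for k
      by (rule g_nonneg)
    show "g (s j) \<le> g (s i)" if "i \<le> j" "j < N" for i j
      using that by (rule s_dec)
    show "\<forall>c. (\<forall>k<N. 0 \<le> c k) \<longrightarrow> (\<Sum>k<N. g (s k) * c k) \<le> step_norm N c"
      using h_le by blast
    show "(\<Sum>k<N. g (s k) * a k) = step_norm N a"
      using h_le[of a] a g_a s_a by simp
  qed
qed

lemma support_weights_sum:
  assumes pte: "pos_transl_equivariant R" and N: "0 < N"
    and a: "\<And>k. k < N \<Longrightarrow> 1 \<le> a k"
    and h_le: "\<And>c. (\<And>k. k < N \<Longrightarrow> 0 \<le> c k) \<Longrightarrow> (\<Sum>k<N. h k * c k) \<le> step_norm N c"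
    and h_a: "(\<Sum>k<N. h k * a k) = step_norm N a"
  shows "(\<Sum>k<N. h k) = 1"
proof (rule antisym)
  have a0: "\<And>k. k < N \<Longrightarrow> 0 \<le> a k"
    using a by (meson order_trans zero_le_one)
  have "(\<Sum>k<N. h k * (a k + 1)) \<le> step_norm N (\<lambda>k. a k + 1)"
    using a0 by (intro h_le) simp
  also have "\<dots> = step_norm N a + 1"
    using a0 by (intro step_norm_add_const[OF pte N]) simp_all
  finally show "(\<Sum>k<N. h k) \<le> 1"
    using h_a by (simp add: distrib_left sum.distrib)
next
  have "(\<Sum>k<N. h k * (a k - 1)) \<le> step_norm N (\<lambda>k. a k - 1)"
    using a by (intro h_le) simp
  also have "\<dots> = step_norm N a - 1"
    using step_norm_add_const[OF pte N, of "\<lambda>k. a k - 1" 1] a by simp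
  finally show "1 \<le> (\<Sum>k<N. h k)"
    using h_a by (simp add: right_diff_distrib sum_subtractf)
qed

lemma nn_integral_step_fun_weights_drearr_le_R:
  fixes h :: "nat \<Rightarrow> real"
  assumes h: "\<And>k. 0 \<le> h k"
    and h_le: "\<And>c. (\<And>k. k < 2 ^ n \<Longrightarrow> 0 \<le> c k) \<Longrightarrow> (\<Sum>k<2 ^ n. h k * c k) \<le> step_norm (2 ^ n) c"
    and Z: "Z \<in> Mplus" and fin: "(\<integral>\<^sup>+ x. Z x \<partial>Omega) < \<infinity>"
  shows "(\<integral>\<^sup>+ x. step_fun (2 ^ n) (\<lambda>k. 2 ^ n * h k) x * drearr Z x \<partial>Omega) \<le> R Z"
proof -
  define N :: nat where "N = 2 ^ n"
  have N: "0 < N"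
    by (simp add: N_def)
  define J where "J k = (\<integral>\<^sup>+ x. drearr Z x * indicator (cell N k) x \<partial>Omega)" for k
  define \<beta> where "\<beta> = cell_avg N (drearr Z)"
  have "J k \<le> (\<integral>\<^sup>+ x. drearr Z x \<partial>Omega)" for k
    unfolding J_def by (intro nn_integral_mono) (simp add: indicator_def)
  then have "J k < \<infinity>" for k
    using fin nn_integral_drearr[OF Z] le_less_trans by metis
  then have \<beta>: "ennreal (\<beta> k) = of_nat N * J k" for k
    by (simp add: \<beta>_def cell_avg_def J_def ennreal_mult_less_top of_nat_less_top)
  have "ennreal (N * h k) * J k = ennreal (h k * \<beta> k)" for k
  proof -
    have "ennreal (h k * \<beta> k) = ennreal (h k) * (of_nat N * J k)"
      by (subst ennreal_mult'[OF h]) (simp add: \<beta>)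
    then show ?thesis
      by (simp add: ennreal_mult' ennreal_of_nat_eq_real_of_nat mult_ac)
  qed
  then have "(\<integral>\<^sup>+ x. step_fun N (\<lambda>k. N * h k) x * drearr Z x \<partial>Omega) = (\<Sum>k<N. ennreal (h k * \<beta> k))"
    using drearr_in_Mplus[OF Z] by (simp add: nn_integral_step_fun_mult Mplus_def J_def)
  also have "\<dots> = ennreal (\<Sum>k<N. h k * \<beta> k)"
    using h by (intro sum_ennreal) (simp add: \<beta>_def cell_avg_def)
  also have "\<dots> \<le> ennreal (step_norm N \<beta>)"
    using h_le[of \<beta>] by (simp add: \<beta>_def cell_avg_def N_def ennreal_leI)
  also have "\<dots> = R (step_fun N \<beta>)"
    by (simp add: R_step_fun[OF N])
  also have "\<dots> \<le> R Z"
    unfolding \<beta>_def N_def by (rule R_step_fun_cell_avg_le[OF Z fin])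
  finally show ?thesis
    by (simp add: N_def)
qed

lemma step_fun_weights_in_dual_densities:
  fixes h :: "nat \<Rightarrow> real"
  assumes h: "\<And>k. 0 \<le> h k" and h_dec: "\<And>i j. i \<le> j \<Longrightarrow> j < 2 ^ n \<Longrightarrow> h j \<le> h i"
    and h_le: "\<And>c. (\<And>k. k < 2 ^ n \<Longrightarrow> 0 \<le> c k) \<Longrightarrow> (\<Sum>k<2 ^ n. h k * c k) \<le> step_norm (2 ^ n) c"
    and h_sum: "(\<Sum>k<2 ^ n. h k) = 1"
  shows "step_fun (2 ^ n) (\<lambda>k. 2 ^ n * h k) \<in> dual_densities R"
proof -
  define Y where "Y = step_fun (2 ^ n) (\<lambda>k. 2 ^ n * h k)"
  have Y: "Y \<in> Mplus"
    unfolding Y_def by (rule step_fun_in_Mplus)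
  have "(2 :: real) ^ n * h j \<le> 2 ^ n * h i" if "i \<le> j" "j < 2 ^ n" for i j
    using h_dec that by (simp add: mult_left_mono)
  then have drearr_Y: "AE w in Omega. drearr Y w = Y w"
    unfolding Y_def by (intro AE_drearr_step_fun) simp_all
  have "(\<integral>\<^sup>+ x. Y x \<partial>Omega) = 1"
    unfolding Y_def using h h_sum by (simp add: nn_integral_step_fun sum_distrib_left[symmetric])
  moreover have "assoc_norm R Y \<le> 1"
    unfolding assoc_norm_def
  proof (rule SUP_least)
    fix Z
    assume "Z \<in> {Z \<in> Mplus. R Z \<le> 1}"
    then have Z: "Z \<in> Mplus" and RZ: "R Z \<le> 1"
      by auto
    obtain C where "(\<integral>\<^sup>+ x. Z x \<partial>Omega) \<le> ennreal C * R Z"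
      using nn_integral_le_R Z by blast
    also have "\<dots> < \<infinity>"
      using RZ by (simp add: ennreal_mult_less_top le_less_trans)
    finally have fin: "(\<integral>\<^sup>+ x. Z x \<partial>Omega) < \<infinity>" .
    have "(\<integral>\<^sup>+ w. drearr Y w * drearr Z w \<partial>Omega) = (\<integral>\<^sup>+ w. Y w * drearr Z w \<partial>Omega)"
      using drearr_Y by (intro nn_integral_cong_AE) auto
    also have "\<dots> \<le> R Z"
      unfolding Y_def by (rule nn_integral_step_fun_weights_drearr_le_R[OF h h_le Z fin])
    finally show "(\<integral>\<^sup>+ w. drearr Y w * drearr Z w \<partial>Omega) \<le> 1"
      using RZ by simp
  qed
  ultimately show ?thesis
    using Y nn_integral_le_assoc_norm[OF Y] by (simp add: dual_densities_def expect_def Y_def)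
qed

lemma dual_density_norming_step_fun:
  assumes pte: "pos_transl_equivariant R"
    and c: "\<And>k. 0 \<le> c k" and c_dec: "\<And>i j. i \<le> j \<Longrightarrow> c j \<le> c i"
  obtains Y where "Y \<in> dual_densities R"
    and "R (step_fun (2 ^ n) c) \<le> (\<integral>\<^sup>+ x. step_fun (2 ^ n) c x * drearr Y x \<partial>Omega)"
proof -
  define N :: nat where "N = 2 ^ n"
  have N: "0 < N"
    by (simp add: N_def)
  define a where "a = (\<lambda>k. c k + 1)"
  have a: "\<And>k. k < N \<Longrightarrow> 0 \<le> a k" and a_dec: "\<And>i j. i \<le> j \<Longrightarrow> j < N \<Longrightarrow> a j \<le> a i"
    using c c_dec by (simp_all add: a_def add_nonneg_pos)
  obtain h where h: "\<And>k. 0 \<le> h k" and h_dec: "\<And>i j. i \<le> j \<Longrightarrow> j < N \<Longrightarrow> h j \<le> h i"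
    and h_le: "\<forall>c. (\<forall>k<N. 0 \<le> c k) \<longrightarrow> (\<Sum>k<N. h k * c k) \<le> step_norm N c"
    and h_a: "(\<Sum>k<N. h k * a k) = step_norm N a"
    using support_weights[where a = a, OF N a a_dec] by blast
  have h_sum: "(\<Sum>k<N. h k) = 1"
    using h_le c by (intro support_weights_sum[OF pte N _ _ h_a]) (auto simp: a_def)
  have "(\<Sum>k<N. h k * c k) + 1 = step_norm N c + 1"
    using h_a h_sum step_norm_add_const[OF pte N, of c 1] c
    by (simp add: a_def distrib_left sum.distrib)
  then have h_c: "(\<Sum>k<N. c k * h k) = step_norm N c"
    by (simp add: mult.commute)
  define Y where "Y = step_fun N (\<lambda>k. N * h k)"
  have "step_fun (2 ^ n) (\<lambda>k. 2 ^ n * h k) \<in> dual_densities R"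
    using h h_dec h_le h_sum by (intro step_fun_weights_in_dual_densities) (auto simp: N_def)
  then have "Y \<in> dual_densities R"
    by (simp add: Y_def N_def)
  moreover have "R (step_fun N c) = (\<integral>\<^sup>+ x. step_fun N c x * drearr Y x \<partial>Omega)"
  proof -
    have "AE x in Omega. drearr Y x = Y x"
      unfolding Y_def using h_dec by (intro AE_drearr_step_fun[OF N]) (simp add: mult_left_mono)
    then have "(\<integral>\<^sup>+ x. step_fun N c x * drearr Y x \<partial>Omega) = (\<integral>\<^sup>+ x. step_fun N c x * Y x \<partial>Omega)"
      by (intro nn_integral_cong_AE) auto
    also have "\<dots> = R (step_fun N c)"
      unfolding Y_def nn_integral_step_fun_mult_step_fun[where a = c and h = h, OF N c h] h_c
      by (simp add: R_step_fun[OF N])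
    finally show ?thesis ..
  qed
  ultimately show ?thesis
    using that unfolding N_def by simp
qed

lemma representation_if_pos_transl_equivariant:
  assumes pte: "pos_transl_equivariant R" and X: "X \<in> Mplus"
  shows "R X = (SUP Y\<in>dual_densities R. \<integral>\<^sup>+ w. drearr X w * drearr Y w \<partial>Omega)"
    (is "_ = ?S")
proof (rule antisym)
  have "R (dyadic_approx n (drearr X)) \<le> ?S" for n
  proof -
    obtain Y where Y: "Y \<in> dual_densities R"
      and R_le: "R (dyadic_approx n (drearr X))
        \<le> (\<integral>\<^sup>+ x. dyadic_approx n (drearr X) x * drearr Y x \<partial>Omega)"
      unfolding dyadic_approx_def
      using dual_density_norming_step_fun[where c = "dyadic_coeff n (drearr X)" and n = n,
          OF pte dyadic_coeff_nonneg dyadic_coeff_antimono[OF drearr_antimono]]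
      by blast
    note R_le
    also have "\<dots> \<le> (\<integral>\<^sup>+ x. drearr X x * drearr Y x \<partial>Omega)"
      using dyadic_approx_drearr_le[OF X] by (intro nn_integral_mono mult_right_mono) simp_all
    also have "\<dots> \<le> ?S"
      using Y by (rule SUP_upper)
    finally show ?thesis .
  qed
  then have "R (drearr X) \<le> ?S"
    by (rule R_le_of_approx[OF dyadic_approx_in_Mplus drearr_in_Mplus[OF X] AE_dyadic_approx_drearr_LIMSEQ[OF X]])
  then show "R X \<le> ?S"
    using R_drearr[OF X] by simp
  show "?S \<le> R X"
    using X by (intro SUP_least nn_integral_drearr_mult_le_R) (auto simp: dual_densities_def)
qed

end

theorem theorem10:
  fixes R :: "(real \<Rightarrow> ennreal) \<Rightarrow> ennreal"
  assumes "ri_function_norm R"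
  shows "(\<forall>X\<in>Mplus. R X = (SUP Y\<in>{Y\<in>Mplus. expect Y = 1 \<and> assoc_norm R Y = 1}.
              \<integral>\<^sup>+ \<omega>. drearr X \<omega> * drearr Y \<omega> \<partial>Omega))
         \<longleftrightarrow> pos_transl_equivariant R"
proof -
  interpret ri_norm R
    by (rule ri_norm.intro) (rule assms)
  show ?thesis
    using pos_transl_equivariant_if_representation representation_if_pos_transl_equivariant
    unfolding dual_densities_def by blast
qed

end
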